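(* For any $\alpha>2$, $q>0$ and $d\geq3$, there is a constant $c=c(\alpha,d,q)>0$ such that if $\varepsilon\le c$, then $$\sup_{x,y\in\mathbb{R}^d}\Pi_{(x,y)}\Big(e^{q\int_0^\infty g(B_s,\widetilde B_s)ds}\Big)\le 2$$ holds for every function $g:\mathbb{R}^d\times\mathbb{R}^d\to\mathbb{R}$ such that $g(x,y)\le\varepsilon(|x-y|^{-\alpha}\wedge1)$ for all $x,y$.
   Context: Under the probability $\Pi_{(x,y)}$, $B_t$ and $\widetilde B_t$ are independent $d$-dimensional standard Brownian motions starting from $x$ and $y$ respectively; $\Pi_{(x,y)}(\cdot)$ also denotes expectation under it. *)

theory Defs
  imports "HOL-Probability.Probability"
begin

definition heat_kernel :: "real \<Rightarrow> 'a::euclidean_space \<Rightarrow> real" where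
  "heat_kernel t z = (2 * pi * t) powr (- real DIM('a) / 2) * exp (- (norm z)\<^sup>2 / (2 * t))"

definition is_BM :: "'w measure \<Rightarrow> (real \<Rightarrow> 'w \<Rightarrow> 'a::euclidean_space) \<Rightarrow> 'a \<Rightarrow> bool" where
  "is_BM M B x \<longleftrightarrow>
     prob_space M \<and>
     (\<forall>t\<ge>0. B t \<in> borel_measurable M) \<and>
     (\<forall>\<omega>\<in>space M. B 0 \<omega> = x \<and> continuous_on {0..} (\<lambda>t. B t \<omega>)) \<and>
     (\<forall>(n::nat) (t::nat \<Rightarrow> real). t 0 = 0 \<and> (\<forall>i<n. t i < t (Suc i)) \<longrightarrow>
        prob_space.indep_vars M (\<lambda>_. borel) (\<lambda>i \<omega>. B (t (Suc i)) \<omega> - B (t i) \<omega>) {..<n} \<and>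
        (\<forall>i<n. distr M borel (\<lambda>\<omega>. B (t (Suc i)) \<omega> - B (t i) \<omega>)
                = density lborel (\<lambda>z. ennreal (heat_kernel (t (Suc i) - t i) z))))"

definition indep_processes :: "'w measure \<Rightarrow> (real \<Rightarrow> 'w \<Rightarrow> 'a::euclidean_space) \<Rightarrow> (real \<Rightarrow> 'w \<Rightarrow> 'a) \<Rightarrow> bool" where
  "indep_processes M B B' \<longleftrightarrow>
     prob_space.indep_var M
       (Pi\<^sub>M {0..} (\<lambda>_. borel)) (\<lambda>\<omega>. restrict (\<lambda>t. B t \<omega>) {0..})
       (Pi\<^sub>M {0..} (\<lambda>_. borel)) (\<lambda>\<omega>. restrict (\<lambda>t. B' t \<omega>) {0..})"

definition ext_integral_0_inf :: "(real \<Rightarrow> real) \<Rightarrow> ereal" where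
  "ext_integral_0_inf f =
     enn2ereal (\<integral>\<^sup>+ s. ennreal (max (f s) 0) * indicator {0..} s \<partial>lborel)
   - enn2ereal (\<integral>\<^sup>+ s. ennreal (max (- f s) 0) * indicator {0..} s \<partial>lborel)"

definition ereal_exp :: "ereal \<Rightarrow> ennreal" where
  "ereal_exp r = (case r of ereal a \<Rightarrow> ennreal (exp a) | PInfty \<Rightarrow> \<top> | MInfty \<Rightarrow> 0)"

end

theory Submission
  imports Defs
begin

text \<open>Khas'minskii's argument. Since \<open>g(x, y) \<le> \<epsilon> \<phi>(x - y)\<close> with
  \<open>\<phi>(z) = min 1 |z|^(-\<beta>)\<close> and \<open>\<beta> = min \<alpha> (5/2) \<in> (2, d)\<close>, it suffices to bound
  \<open>E exp(q \<epsilon> F(0))\<close> for \<open>F(u) = \<integral>\<^sub>u\<^sup>\<infinity> \<phi>(B s - B' s) ds\<close>. By the Markov property at time \<open>u\<close>,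
  the conditional expectation of \<open>\<phi>(B r - B' r)\<close> given the past is at most \<open>h(r - u)\<close>, where
  \<open>h(s) \<approx> min 1 (s^(-\<beta>/2))\<close> comes from integrating \<open>\<phi>\<close> against the Gaussian kernel
  (this needs \<open>\<beta> < d\<close>), and \<open>K = \<integral>\<^sub>0\<^sup>\<infinity> h\<close> is finite because \<open>\<beta> > 2\<close>.
  Together with \<open>F(u)^(n+1) = (n+1) \<integral>\<^sub>u\<^sup>\<infinity> \<phi>(B r - B' r) F(r)^n dr\<close> this gives
  \<open>E F(0)^n \<le> n! K^n\<close> by induction on \<open>n\<close>, so \<open>E exp(q \<epsilon> F(0)) \<le> \<Sum> (q \<epsilon> K)^n \<le> 2\<close>
  as soon as \<open>q \<epsilon> K \<le> 1/2\<close>.\<close>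

section \<open>Heat kernel estimates\<close>

definition polydecay :: "real \<Rightarrow> 'a::real_normed_vector \<Rightarrow> real" where
  "polydecay \<beta> z = (max 1 (norm z)) powr (-\<beta>)"

lemma polydecay_nonneg: "0 \<le> polydecay \<beta> z"
  by (simp add: polydecay_def)

lemma polydecay_le_1: "0 \<le> \<beta> \<Longrightarrow> polydecay \<beta> z \<le> 1"
  unfolding polydecay_def by (simp add: powr_minus ge_one_powr_ge_zero inverse_le_1_iff)

lemma continuous_on_polydecay: "continuous_on S (polydecay \<beta>)"
  unfolding polydecay_def by (intro continuous_intros) auto

lemma borel_measurable_polydecay [measurable]: "polydecay \<beta> \<in> borel_measurable borel"
  using continuous_on_polydecay borel_measurable_continuous_onI by blast

lemma cutoff_powr_le_polydecay:
  fixes a b :: "'a::real_normed_vector"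
  assumes "\<beta> \<le> \<alpha>"
  shows "(if a = b then 1 else min (norm (a - b) powr (- \<alpha>)) 1) \<le> polydecay \<beta> (a - b)"
proof (cases "a \<noteq> b \<and> 1 < norm (a - b)")
  case True
  then have "norm (a - b) powr (- \<alpha>) \<le> norm (a - b) powr (- \<beta>)"
    using assms by (intro powr_mono) auto
  then show ?thesis
    using True by (simp add: polydecay_def max_def min_le_iff_disj)
qed (auto simp: polydecay_def max_def)

lemma (in prob_space) indep_var_cong:
  assumes "indep_var S X T Y"
    and "\<And>\<omega>. \<omega> \<in> space M \<Longrightarrow> X \<omega> = X' \<omega>" and "\<And>\<omega>. \<omega> \<in> space M \<Longrightarrow> Y \<omega> = Y' \<omega>"
  shows "indep_var S X' T Y'"
proof -
  have rv: "random_variable S X" "random_variable T Y"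
    and eq: "distr M S X \<Otimes>\<^sub>M distr M T Y = distr M (S \<Otimes>\<^sub>M T) (\<lambda>x. (X x, Y x))"
    using assms(1) unfolding indep_var_distribution_eq by auto
  have "random_variable S X'" "random_variable T Y'"
    using rv measurable_cong[of M X X' S] measurable_cong[of M Y Y' T] assms(2,3) by auto
  moreover have "distr M S X' = distr M S X" "distr M T Y' = distr M T Y"
    "distr M (S \<Otimes>\<^sub>M T) (\<lambda>x. (X' x, Y' x)) = distr M (S \<Otimes>\<^sub>M T) (\<lambda>x. (X x, Y x))"
    using assms(2,3) by (auto intro!: distr_cong)
  ultimately show ?thesis
    unfolding indep_var_distribution_eq using eq by simp
qed

lemma cball_in_borel [measurable]: "cball c r \<in> sets borel"
  by (simp add: borel_closed)

lemma le_suminf_ennreal: "(f k :: ennreal) \<le> (\<Sum>i. f i)"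
  using sum_le_suminf[of f "{k}"] by (simp add: summableI)

lemma dyadic_shell_term:
  fixes \<rho> \<beta> :: real
  assumes "\<rho> > 0"
  shows "(\<rho> / 2^(k+1)) powr (-\<beta>) * (\<rho> / 2^k) ^ D
       = 2 powr \<beta> * \<rho> powr (real D - \<beta>) * (2 powr (\<beta> - real D)) ^ k"
proof -
  have pow2: "(2::real)^n = 2 powr (real n)" for n
    by (simp add: powr_realpow)
  have "(\<rho> / 2^(k+1)) powr (-\<beta>) = \<rho> powr (-\<beta>) / (2 powr real (k+1)) powr (-\<beta>)"
    by (simp only: powr_divide pow2)
  also have "\<dots> = \<rho> powr (-\<beta>) * 2 powr (real k * \<beta>) * 2 powr \<beta>"
    by (simp add: powr_powr powr_minus divide_inverse powr_add[symmetric] algebra_simps)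
  finally have a: "(\<rho> / 2^(k+1)) powr (-\<beta>) = \<rho> powr (-\<beta>) * 2 powr (real k * \<beta>) * 2 powr \<beta>" .
  have "(\<rho> / 2^k) ^ D = (\<rho> / 2^k) powr (real D)"
    using assms by (simp add: powr_realpow)
  also have "\<dots> = \<rho> powr (real D) / (2 powr real k) powr (real D)"
    by (simp only: powr_divide pow2)
  finally have b: "(\<rho> / 2^k) ^ D = \<rho> powr (real D) * 2 powr (- (real k * real D))"
    by (simp add: powr_powr powr_minus divide_inverse)
  have "(2 powr (\<beta> - real D)) ^ k = 2 powr (real k * \<beta> + - (real k * real D))"
    by (subst powr_power) (simp_all add: algebra_simps)
  then have c: "(2 powr (\<beta> - real D)) ^ k = 2 powr (real k * \<beta>) * 2 powr (- (real k * real D))"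
    by (simp only: powr_add)
  have d: "\<rho> powr (real D - \<beta>) = \<rho> powr (real D) * \<rho> powr (-\<beta>)"
    by (simp add: powr_add[symmetric])
  show ?thesis
    unfolding a b c d by (simp add: algebra_simps)
qed

lemma cball_norm_powr_le_dyadic_sum:
  fixes c w :: "'a::real_normed_vector" and \<beta> \<rho> :: real
  assumes "0 < \<beta>" and "0 < \<rho>"
  shows "indicator (cball c \<rho>) w * ennreal (norm (w - c) powr (-\<beta>))
      \<le> (\<Sum>k. ennreal ((\<rho> / 2^(k+1)) powr (-\<beta>)) * indicator (cball c (\<rho> / 2^k)) w)"
proof (cases "w \<in> cball c \<rho> \<and> w \<noteq> c")
  case False
  then show ?thesis by (auto simp: indicator_def)
next
  case True
  define r where "r = norm (w - c)"
  have r: "0 < r" "r \<le> \<rho>"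
    using True by (auto simp: r_def dist_norm norm_minus_commute)
  obtain n where n: "(1/2::real)^n < r / \<rho>"
    using real_arch_pow_inv[of "r / \<rho>" "1/2"] r assms by auto
  have "\<rho> / 2^(n+1) \<le> \<rho> * (1/2)^n"
    using assms by (simp add: field_simps)
  also have "\<dots> < r"
    using n assms by (simp add: field_simps)
  finally obtain k where k: "\<rho> / 2^(k+1) < r" and least: "\<And>j. j < k \<Longrightarrow> \<not> \<rho> / 2^(j+1) < r"
    using exists_least_iff[of "\<lambda>n. \<rho> / 2^(n+1) < r"] by blast
  have "r \<le> \<rho> / 2^k"
    using least[of "k - 1"] r by (cases k) auto
  moreover have "norm (w - c) powr (-\<beta>) \<le> (\<rho> / 2^(k+1)) powr (-\<beta>)"
    unfolding r_def[symmetric] using k assms by (intro powr_mono2') auto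
  ultimately have "indicator (cball c \<rho>) w * ennreal (norm (w - c) powr (-\<beta>))
      \<le> ennreal ((\<rho> / 2^(k+1)) powr (-\<beta>)) * indicator (cball c (\<rho> / 2^k)) w"
    using True by (auto simp: indicator_def r_def dist_norm norm_minus_commute intro: ennreal_leI)
  also have "\<dots> \<le> (\<Sum>k. ennreal ((\<rho> / 2^(k+1)) powr (-\<beta>)) * indicator (cball c (\<rho> / 2^k)) w)"
    by (rule le_suminf_ennreal)
  finally show ?thesis .
qed

definition shell_const :: "real \<Rightarrow> real \<Rightarrow> real" where
  "shell_const \<beta> d = 2 powr \<beta> * unit_ball_vol d / (1 - 2 powr (\<beta> - d))"

lemma shell_const_nonneg: "\<beta> < d \<Longrightarrow> 0 \<le> d \<Longrightarrow> 0 \<le> shell_const \<beta> d"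
  unfolding shell_const_def by (auto intro!: divide_nonneg_pos powr_less_one)

text \<open>Summing over the dyadic shells \<open>\<rho>/2^(k+1) < |w - c| \<le> \<rho>/2^k\<close> gives a geometric
  series, which converges exactly when \<open>\<beta> < d\<close>.\<close>
lemma nn_integral_cball_norm_powr_le:
  fixes c :: "'a::euclidean_space" and \<beta> \<rho> :: real
  assumes "0 < \<beta>" and "\<beta> < DIM('a)" and "0 < \<rho>"
  shows "(\<integral>\<^sup>+w. indicator (cball c \<rho>) w * ennreal (norm (w - c) powr (-\<beta>)) \<partial>lborel)
      \<le> ennreal (shell_const \<beta> DIM('a) * \<rho> powr (DIM('a) - \<beta>))"
proof -
  define d where "d = real DIM('a)"
  define a where "a k = 2 powr \<beta> * unit_ball_vol d * \<rho> powr (d - \<beta>) * (2 powr (\<beta> - d))^k" for k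
  have ratio: "norm (2 powr (\<beta> - d)) < 1"
    using assms by (simp add: d_def powr_less_one)
  have "(\<integral>\<^sup>+w. indicator (cball c \<rho>) w * ennreal (norm (w - c) powr (-\<beta>)) \<partial>lborel)
      \<le> (\<integral>\<^sup>+w. (\<Sum>k. ennreal ((\<rho> / 2^(k+1)) powr (-\<beta>)) * indicator (cball c (\<rho> / 2^k)) w) \<partial>lborel)"
    using assms by (intro nn_integral_mono cball_norm_powr_le_dyadic_sum)
  also have "\<dots> = (\<Sum>k. \<integral>\<^sup>+w. ennreal ((\<rho> / 2^(k+1)) powr (-\<beta>)) * indicator (cball c (\<rho> / 2^k)) w \<partial>lborel)"
    by (intro nn_integral_suminf) auto
  also have "\<dots> = (\<Sum>k. ennreal (a k))"
  proof (intro suminf_cong)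
    fix k
    have "(\<rho> / 2^(k+1)) powr (-\<beta>) * (unit_ball_vol d * (\<rho> / 2^k) ^ DIM('a)) = a k"
      unfolding a_def d_def mult.left_commute[of _ "unit_ball_vol _"] dyadic_shell_term[OF assms(3)]
      by (simp only: mult_ac)
    then show "(\<integral>\<^sup>+w. ennreal ((\<rho> / 2^(k+1)) powr (-\<beta>)) * indicator (cball c (\<rho> / 2^k)) w \<partial>lborel)
        = ennreal (a k)"
      using assms by (simp add: nn_integral_cmult_indicator emeasure_cball d_def flip: ennreal_mult)
  qed
  also have "\<dots> = ennreal (\<Sum>k. a k)"
    using ratio by (intro suminf_ennreal2) (auto simp: a_def d_def intro!: summable_mult summable_geometric)
  also have "(\<Sum>k. a k) = shell_const \<beta> d * \<rho> powr (d - \<beta>)"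
    unfolding a_def shell_const_def using suminf_mult[OF summable_geometric[OF ratio]] suminf_geometric[OF ratio]
    by (simp add: divide_inverse)
  finally show ?thesis by (simp add: d_def)
qed

lemma heat_kernel_nonneg: "0 \<le> heat_kernel s z"
  unfolding heat_kernel_def by simp

lemma heat_kernel_le: "0 < s \<Longrightarrow> heat_kernel s (z::'a::euclidean_space) \<le> (2 * pi * s) powr (- real DIM('a) / 2)"
  unfolding heat_kernel_def by (rule mult_left_le) auto

lemma borel_measurable_heat_kernel [measurable]: "heat_kernel s \<in> borel_measurable borel"
  unfolding heat_kernel_def by measurable

definition heat_const :: "real \<Rightarrow> real \<Rightarrow> real" where
  "heat_const \<beta> d = (2 * pi) powr (- d / 2) * shell_const \<beta> d + 1"

lemma heat_const_nonneg: "\<beta> < d \<Longrightarrow> 0 \<le> d \<Longrightarrow> 0 \<le> heat_const \<beta> d"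
  unfolding heat_const_def using shell_const_nonneg[of \<beta> d] by simp

text \<open>Split at \<open>|v + z| = R\<close>: inside, bound the kernel by its maximum and keep the
  singularity; outside, bound \<open>polydecay\<close> by \<open>R^(-\<beta>)\<close>.\<close>
lemma heat_kernel_polydecay_le_split:
  fixes v z :: "'a::euclidean_space" and s \<beta> R :: real
  assumes "0 < s" and "0 < \<beta>" and "0 < R" and "z \<noteq> -v"
  shows "ennreal (heat_kernel s z) * ennreal (polydecay \<beta> (v + z))
    \<le> ennreal ((2 * pi * s) powr (- real DIM('a) / 2)) * (indicator (cball (-v) R) z * ennreal (norm (z - (-v)) powr (-\<beta>)))
      + ennreal (heat_kernel s z) * ennreal (R powr (-\<beta>))"
proof (cases "norm (v + z) \<le> R")
  case True
  have "0 < norm (v + z)"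
    using assms(4) by (auto simp: add_eq_0_iff)
  then have "polydecay \<beta> (v + z) \<le> norm (v + z) powr (-\<beta>)"
    unfolding polydecay_def using assms(2) by (intro powr_mono2') auto
  then have "heat_kernel s z * polydecay \<beta> (v + z) \<le> (2 * pi * s) powr (- real DIM('a) / 2) * norm (v + z) powr (-\<beta>)"
    using heat_kernel_le[OF assms(1), of z] by (intro mult_mono) (auto simp: heat_kernel_nonneg polydecay_nonneg)
  then have "ennreal (heat_kernel s z) * ennreal (polydecay \<beta> (v + z))
      \<le> ennreal ((2 * pi * s) powr (- real DIM('a) / 2)) * (indicator (cball (-v) R) z * ennreal (norm (z - (-v)) powr (-\<beta>)))"
    using True by (simp add: indicator_def dist_norm add.commute norm_minus_commute[of "-v"]
        heat_kernel_nonneg ennreal_leI flip: ennreal_mult')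
  then show ?thesis
    by (rule order_trans) simp
next
  case False
  then have "polydecay \<beta> (v + z) \<le> R powr (-\<beta>)"
    unfolding polydecay_def using assms(2,3) by (intro powr_mono2') auto
  then have "ennreal (heat_kernel s z) * ennreal (polydecay \<beta> (v + z))
      \<le> ennreal (heat_kernel s z) * ennreal (R powr (-\<beta>))"
    by (intro mult_left_mono ennreal_leI) auto
  then show ?thesis
    by (rule order_trans) simp
qed

lemma nn_integral_heat_kernel_polydecay_le:
  fixes v :: "'a::euclidean_space" and s \<beta> :: real
  assumes s: "0 < s" and \<beta>: "0 < \<beta>" "\<beta> < DIM('a)"
    and normalized: "(\<integral>\<^sup>+z. ennreal (heat_kernel s (z::'a)) \<partial>lborel) = 1"
  shows "(\<integral>\<^sup>+z. ennreal (heat_kernel s z) * ennreal (polydecay \<beta> (v + z)) \<partial>lborel)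
      \<le> ennreal (heat_const \<beta> DIM('a) * s powr (-\<beta>/2))"
proof -
  define d where "d = real DIM('a)"
  define R where "R = s powr (1/2)"
  define P where "P = (2 * pi * s) powr (- d / 2)"
  have R: "0 < R" and P: "0 \<le> P"
    using s by (simp_all add: R_def P_def)
  have "(\<integral>\<^sup>+z. ennreal (heat_kernel s z) * ennreal (polydecay \<beta> (v + z)) \<partial>lborel)
      \<le> (\<integral>\<^sup>+z. ennreal P * (indicator (cball (-v) R) z * ennreal (norm (z - (-v)) powr (-\<beta>)))
          + ennreal (heat_kernel s z) * ennreal (R powr (-\<beta>)) \<partial>lborel)"
    using AE_lborel_singleton[of "-v"] heat_kernel_polydecay_le_split[OF s \<beta>(1) R, of _ v]
    unfolding P_def d_def by (intro nn_integral_mono_AE) (auto elim!: AE_mp)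
  also have "\<dots> = ennreal P * (\<integral>\<^sup>+z. indicator (cball (-v) R) z * ennreal (norm (z - (-v)) powr (-\<beta>)) \<partial>lborel)
      + (\<integral>\<^sup>+z. ennreal (heat_kernel s (z::'a)) \<partial>lborel) * ennreal (R powr (-\<beta>))"
    by (simp add: nn_integral_add nn_integral_cmult nn_integral_multc)
  also have "\<dots> \<le> ennreal P * ennreal (shell_const \<beta> d * R powr (d - \<beta>)) + 1 * ennreal (R powr (-\<beta>))"
    unfolding normalized d_def using nn_integral_cball_norm_powr_le[OF \<beta> R, of "-v"]
    by (intro add_mono mult_left_mono) auto
  also have "\<dots> = ennreal (P * (shell_const \<beta> d * R powr (d - \<beta>)) + R powr (-\<beta>))"
    using P shell_const_nonneg[of \<beta> d] \<beta> by (simp add: d_def ennreal_mult ennreal_plus)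
  also have "P * (shell_const \<beta> d * R powr (d - \<beta>)) + R powr (-\<beta>) = heat_const \<beta> d * s powr (-\<beta>/2)"
  proof -
    have "R powr (d - \<beta>) = s powr ((d - \<beta>)/2)" "R powr (-\<beta>) = s powr (-\<beta>/2)"
      unfolding R_def powr_powr by simp_all
    moreover have "P = (2 * pi) powr (- d / 2) * s powr (- d / 2)"
      unfolding P_def using s by (simp add: powr_mult)
    moreover have "s powr (- d / 2) * s powr ((d - \<beta>)/2) = s powr (-\<beta>/2)"
      by (simp add: powr_add[symmetric] field_simps)
    ultimately show ?thesis
      unfolding heat_const_def by (simp add: algebra_simps)
  qed
  finally show ?thesis
    by (simp add: d_def)
qed

definition heat_profile :: "real \<Rightarrow> real \<Rightarrow> real \<Rightarrow> real" where
  "heat_profile \<beta> d s = (if s \<le> 1 then 1 else heat_const \<beta> d * s powr (-\<beta>/2))"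

lemma borel_measurable_heat_profile [measurable]: "heat_profile \<beta> d \<in> borel_measurable borel"
  unfolding heat_profile_def by measurable

lemma nn_integral_heat_kernel_polydecay_le_profile:
  fixes v :: "'a::euclidean_space" and s \<beta> :: real
  assumes "0 < s" and "0 < \<beta>" and "\<beta> < DIM('a)"
    and normalized: "(\<integral>\<^sup>+z. ennreal (heat_kernel s (z::'a)) \<partial>lborel) = 1"
  shows "(\<integral>\<^sup>+z. ennreal (heat_kernel s z) * ennreal (polydecay \<beta> (v + z)) \<partial>lborel)
      \<le> ennreal (heat_profile \<beta> DIM('a) s)"
proof (cases "s \<le> 1")
  case True
  have "(\<integral>\<^sup>+z. ennreal (heat_kernel s z) * ennreal (polydecay \<beta> (v + z)) \<partial>lborel)
      \<le> (\<integral>\<^sup>+z. ennreal (heat_kernel s (z::'a)) \<partial>lborel)"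
    using polydecay_le_1[of \<beta>] assms
    by (intro nn_integral_mono) (auto intro!: mult_right_le_one_le ennreal_leI
        simp: heat_kernel_nonneg polydecay_nonneg simp flip: ennreal_mult')
  then show ?thesis
    using True by (simp add: normalized heat_profile_def)
next
  case False
  then show ?thesis
    using nn_integral_heat_kernel_polydecay_le[OF assms, of v] by (simp add: heat_profile_def)
qed

definition green_const :: "real \<Rightarrow> real \<Rightarrow> real" where
  "green_const \<beta> d = 1 + 2 * heat_const \<beta> d / (\<beta> - 2)"

lemma green_const_pos: "2 < \<beta> \<Longrightarrow> \<beta> < d \<Longrightarrow> 0 < green_const \<beta> d"
  unfolding green_const_def using heat_const_nonneg[of \<beta> d] by (simp add: add_pos_nonneg)

text \<open>Integrability of \<open>s^(-\<beta>/2)\<close> at infinity is where \<open>\<beta> > 2\<close> is needed.\<close>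
lemma nn_integral_heat_profile_le:
  assumes "2 < \<beta>" and "\<beta> < d"
  shows "(\<integral>\<^sup>+s. ennreal (heat_profile \<beta> d s) * indicator {0..} s \<partial>lborel) \<le> ennreal (green_const \<beta> d)"
proof -
  have C: "0 \<le> heat_const \<beta> d"
    using heat_const_nonneg[of \<beta> d] assms by simp
  have "2 / (\<beta> - 2) = - (1 powr (-\<beta>/2 + 1)) / (-\<beta>/2 + 1)"
    using assms by (simp add: field_simps)
  then have tail: "((\<lambda>s. s powr (-\<beta>/2)) has_integral 2 / (\<beta> - 2)) {1..}"
    using has_integral_powr_to_inf[of "-\<beta>/2" 1] assms by simp
  have "(\<integral>\<^sup>+s. ennreal (heat_profile \<beta> d s) * indicator {0..} s \<partial>lborel)
      \<le> (\<integral>\<^sup>+s. indicator {0..1} s + ennreal (heat_const \<beta> d) * ennreal (indicator {1..} s * s powr (-\<beta>/2)) \<partial>lborel)"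
    using C by (intro nn_integral_mono) (auto simp: heat_profile_def indicator_def intro: ennreal_leI
        simp flip: ennreal_mult')
  also have "\<dots> = (\<integral>\<^sup>+s. indicator {0..1::real} s \<partial>lborel)
      + ennreal (heat_const \<beta> d) * (\<integral>\<^sup>+s. ennreal (indicator {1..} s * s powr (-\<beta>/2)) \<partial>lborel)"
    by (subst nn_integral_add) (auto simp: nn_integral_cmult)
  also have "\<dots> = ennreal 1 + ennreal (heat_const \<beta> d) * ennreal (2 / (\<beta> - 2))"
    using nn_integral_has_integral_lebesgue[OF _ tail] by simp
  also have "\<dots> = ennreal (green_const \<beta> d)"
    using C assms by (simp add: green_const_def ennreal_plus flip: ennreal_mult)
  finally show ?thesis .
qed

lemma nn_integral_heat_profile_shift_le:
  assumes "2 < \<beta>" and "\<beta> < d"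
  shows "(\<integral>\<^sup>+r. ennreal (heat_profile \<beta> d (r - u)) * indicator {u..} r \<partial>lborel) \<le> ennreal (green_const \<beta> d)"
proof -
  have "(\<integral>\<^sup>+r. ennreal (heat_profile \<beta> d (r - u)) * indicator {u..} r \<partial>lborel)
      = (\<integral>\<^sup>+s. ennreal (heat_profile \<beta> d s) * indicator {0..} s \<partial>lborel)"
    using nn_integral_real_affine[of "\<lambda>r. ennreal (heat_profile \<beta> d (r - u)) * indicator {u..} r" 1 u]
    by (simp add: indicator_def)
  also have "\<dots> \<le> ennreal (green_const \<beta> d)"
    using assms by (rule nn_integral_heat_profile_le)
  finally show ?thesis .
qed

section \<open>Powers of tail integrals\<close>

lemma SUP_power_ennreal:
  fixes a :: "nat \<Rightarrow> ennreal"
  assumes "incseq a"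
  shows "(SUP i. a i) ^ m = (SUP i. a i ^ m)"
proof (induction m)
  case 0
  then show ?case by simp
next
  case (Suc m)
  have "(SUP i. a i) ^ Suc m = (SUP j. SUP i. a j * a i ^ m)"
    using Suc by (simp add: SUP_mult_left_ennreal SUP_mult_right_ennreal) (rule SUP_commute)
  also have "\<dots> = (SUP i. a i ^ Suc m)"
  proof (rule antisym)
    show "(SUP j. SUP i. a j * a i ^ m) \<le> (SUP i. a i ^ Suc m)"
    proof (intro SUP_least)
      fix i j
      have "a j * a i ^ m \<le> a (max i j) * a (max i j) ^ m"
        using assms by (intro mult_mono power_mono_ennreal) (auto simp: incseq_def)
      also have "\<dots> \<le> (SUP i. a i ^ Suc m)"
        by (rule SUP_upper2[of "max i j"]) simp_all
      finally show "a j * a i ^ m \<le> (SUP i. a i ^ Suc m)" .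
    qed
    show "(SUP i. a i ^ Suc m) \<le> (SUP j. SUP i. a j * a i ^ m)"
      by (intro SUP_least SUP_upper2) auto
  qed
  finally show ?case .
qed

lemma SUP_indicator_atLeastAtMost_nat:
  "(SUP k::nat. indicator {u..u + real k} s :: ennreal) = indicator {u..} (s::real)"
proof (cases "u \<le> s")
  case True
  have "indicator {u..u + real (nat \<lceil>s - u\<rceil>)} s = (1::ennreal)"
    using True by (auto simp: indicator_def) linarith
  then have "(1::ennreal) \<le> (SUP k::nat. indicator {u..u + real k} s)"
    by (metis SUP_upper UNIV_I)
  moreover have "(SUP k::nat. indicator {u..u + real k} s :: ennreal) \<le> 1"
    by (intro SUP_least) (auto simp: indicator_def)
  ultimately show ?thesis
    using True by (simp add: indicator_def antisym)
qed (simp add: indicator_def)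

text \<open>The fundamental theorem of calculus applied to \<open>r \<mapsto> -(\<integral>\<^sub>r\<^sup>T f)^(n+1)\<close>.\<close>
lemma has_integral_power_integral_tail:
  fixes f :: "real \<Rightarrow> real"
  assumes cont: "continuous_on UNIV f" and "u \<le> T"
  shows "((\<lambda>r. real (Suc n) * f r * integral {r..T} f ^ n) has_integral integral {u..T} f ^ Suc n) {u..T}"
proof -
  have cT: "continuous_on {a..b} f" for a b
    using cont by (rule continuous_on_subset) auto
  define P where "P r = - ((integral {u..T} f - integral {u..r} f) ^ Suc n)" for r
  have tail: "integral {r..T} f = integral {u..T} f - integral {u..r} f" if "r \<in> {u..T}" for r
  proof -
    have "integral {u..r} f + integral {r..T} f = integral {u..T} f"
      using that by (intro Henstock_Kurzweil_Integration.integral_combine integrable_continuous_interval cT) auto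
    then show ?thesis by linarith
  qed
  have "((\<lambda>r. real (Suc n) * f r * integral {r..T} f ^ n) has_integral P T - P u) {u..T}"
  proof (rule fundamental_theorem_of_calculus[OF assms(2)])
    fix x assume x: "x \<in> {u..T}"
    have d: "((\<lambda>r. integral {u..r} f) has_real_derivative f x) (at x within {u..T})"
      using integral_has_vector_derivative[OF cT x] by (simp add: has_real_derivative_iff_has_vector_derivative)
    have "(P has_real_derivative real (Suc n) * f x * integral {x..T} f ^ n) (at x within {u..T})"
      unfolding P_def tail[OF x] by (rule derivative_eq_intros d refl | simp)+
    then show "(P has_vector_derivative real (Suc n) * f x * integral {x..T} f ^ n) (at x within {u..T})"
      by (simp add: has_real_derivative_iff_has_vector_derivative)
  qed
  then show ?thesis
    by (simp add: P_def)
qed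

lemma nn_integral_atLeast_eq_SUP:
  fixes f :: "real \<Rightarrow> real"
  assumes cont: "continuous_on UNIV f" and nonneg: "\<And>s. 0 \<le> f s"
  shows "(\<integral>\<^sup>+s. ennreal (f s) * indicator {u..} s \<partial>lborel) = (SUP k::nat. ennreal (integral {u..u + real k} f))"
    and "incseq (\<lambda>k::nat. ennreal (integral {u..u + real k} f))"
proof -
  have [measurable]: "f \<in> borel_measurable borel"
    using cont borel_measurable_continuous_onI by blast
  have fin: "(\<integral>\<^sup>+s. ennreal (f s) * indicator {u..T} s \<partial>lborel) = ennreal (integral {u..T} f)" for T
    using nonneg continuous_on_subset[OF cont]
    by (intro nn_integral_has_integral_lebesgue' integrable_integral integrable_continuous_interval) auto
  have "(\<integral>\<^sup>+s. ennreal (f s) * indicator {u..} s \<partial>lborel)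
      = (\<integral>\<^sup>+s. (SUP k::nat. ennreal (f s) * indicator {u..u + real k} s) \<partial>lborel)"
    by (simp add: SUP_mult_left_ennreal[symmetric] SUP_indicator_atLeastAtMost_nat)
  also have "\<dots> = (SUP k::nat. \<integral>\<^sup>+s. ennreal (f s) * indicator {u..u + real k} s \<partial>lborel)"
    by (intro nn_integral_monotone_convergence_SUP) (auto simp: incseq_def le_fun_def indicator_def)
  finally show "(\<integral>\<^sup>+s. ennreal (f s) * indicator {u..} s \<partial>lborel) = (SUP k::nat. ennreal (integral {u..u + real k} f))"
    by (simp only: fin)
  show "incseq (\<lambda>k::nat. ennreal (integral {u..u + real k} f))"
    unfolding fin[symmetric] by (intro incseq_SucI nn_integral_mono) (auto simp: indicator_def)
qed

lemma borel_measurable_nn_integral_atLeast: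
  fixes f :: "real \<Rightarrow> real"
  assumes [measurable]: "f \<in> borel_measurable borel"
  shows "(\<lambda>u. \<integral>\<^sup>+s. ennreal (f s) * indicator {u..} s \<partial>lborel) \<in> borel_measurable borel"
proof -
  have "(\<lambda>p :: real \<times> real. if fst p \<le> snd p then ennreal (f (snd p)) else 0) \<in> borel_measurable (borel \<Otimes>\<^sub>M lborel)"
    by measurable
  then have "(\<lambda>(r, s). ennreal (f s) * indicator {r..} s) \<in> borel_measurable (borel \<Otimes>\<^sub>M lborel)"
    by (rule measurable_cong[THEN iffD1, rotated]) (auto simp: indicator_def)
  from lborel.borel_measurable_nn_integral[OF this] show ?thesis
    by simp
qed

lemma ennreal_integral_power_le:
  fixes f :: "real \<Rightarrow> real"
  assumes cont: "continuous_on UNIV f" and nonneg: "\<And>s. 0 \<le> f s" and "u \<le> T"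
  defines "F \<equiv> \<lambda>u. \<integral>\<^sup>+s. ennreal (f s) * indicator {u..} s \<partial>lborel"
  shows "ennreal (integral {u..T} f) ^ Suc n
    \<le> ennreal (real (Suc n)) * (\<integral>\<^sup>+r. ennreal (f r) * F r ^ n * indicator {u..} r \<partial>lborel)"
proof -
  have [measurable]: "f \<in> borel_measurable borel"
    using cont borel_measurable_continuous_onI by blast
  have [measurable]: "F \<in> borel_measurable borel"
    unfolding F_def by (rule borel_measurable_nn_integral_atLeast) measurable
  have cT: "continuous_on {a..b} f" for a b
    using cont by (rule continuous_on_subset) auto
  have tail_nonneg: "0 \<le> integral {r..T} f" for r
    using nonneg by (intro integral_nonneg integrable_continuous_interval cT) auto
  have tail_le: "ennreal (integral {r..T} f) \<le> F r" for r
  proof -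
    have "ennreal (integral {r..T} f) = (\<integral>\<^sup>+s. ennreal (f s) * indicator {r..T} s \<partial>lborel)"
      using nonneg by (intro nn_integral_has_integral_lebesgue'[symmetric] integrable_integral
          integrable_continuous_interval cT)
    also have "\<dots> \<le> F r"
      unfolding F_def using nonneg by (intro nn_integral_mono) (auto simp: indicator_def)
    finally show ?thesis .
  qed
  have "ennreal (integral {u..T} f) ^ Suc n = ennreal (integral {u..T} f ^ Suc n)"
    using tail_nonneg by (rule ennreal_power)
  also have "\<dots> = (\<integral>\<^sup>+r. ennreal (real (Suc n) * f r * integral {r..T} f ^ n) * indicator {u..T} r \<partial>lborel)"
    using nonneg tail_nonneg
    by (intro nn_integral_has_integral_lebesgue'[symmetric] has_integral_power_integral_tail cont assms(3)) simp
  also have "\<dots> \<le> (\<integral>\<^sup>+r. ennreal (real (Suc n)) * (ennreal (f r) * F r ^ n * indicator {u..} r) \<partial>lborel)"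
  proof (intro nn_integral_mono)
    fix r
    have "ennreal (real (Suc n) * f r * integral {r..T} f ^ n)
        = ennreal (real (Suc n)) * (ennreal (f r) * ennreal (integral {r..T} f) ^ n)"
      using nonneg tail_nonneg by (simp add: ennreal_mult' ennreal_power mult.assoc)
    also have "\<dots> \<le> ennreal (real (Suc n)) * (ennreal (f r) * F r ^ n)"
      by (intro mult_left_mono power_mono_ennreal tail_le) auto
    finally show "ennreal (real (Suc n) * f r * integral {r..T} f ^ n) * indicator {u..T} r
        \<le> ennreal (real (Suc n)) * (ennreal (f r) * F r ^ n * indicator {u..} r)"
      by (auto simp: indicator_def)
  qed
  also have "\<dots> = ennreal (real (Suc n)) * (\<integral>\<^sup>+r. ennreal (f r) * F r ^ n * indicator {u..} r \<partial>lborel)"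
    by (rule nn_integral_cmult) measurable
  finally show ?thesis .
qed

lemma nn_integral_tail_power_le:
  fixes f :: "real \<Rightarrow> real"
  assumes cont: "continuous_on UNIV f" and nonneg: "\<And>s. 0 \<le> f s"
  defines "F \<equiv> \<lambda>u. \<integral>\<^sup>+s. ennreal (f s) * indicator {u..} s \<partial>lborel"
  shows "F u ^ Suc n \<le> ennreal (real (Suc n)) * (\<integral>\<^sup>+r. ennreal (f r) * F r ^ n * indicator {u..} r \<partial>lborel)"
proof -
  have "F u ^ Suc n = (SUP k::nat. ennreal (integral {u..u + real k} f) ^ Suc n)"
    unfolding F_def nn_integral_atLeast_eq_SUP(1)[OF cont nonneg]
    by (rule SUP_power_ennreal[OF nn_integral_atLeast_eq_SUP(2)[OF cont nonneg]])
  also have "\<dots> \<le> ennreal (real (Suc n)) * (\<integral>\<^sup>+r. ennreal (f r) * F r ^ n * indicator {u..} r \<partial>lborel)"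
    unfolding F_def by (intro SUP_least ennreal_integral_power_le cont nonneg) simp
  finally show ?thesis .
qed

definition exp_ennreal :: "ennreal \<Rightarrow> ennreal" where
  "exp_ennreal z = (\<Sum>n. ennreal (1 / fact n) * z ^ n)"

lemma exp_ennreal_mono: "a \<le> b \<Longrightarrow> exp_ennreal a \<le> exp_ennreal b"
  unfolding exp_ennreal_def by (intro suminf_le mult_left_mono power_mono_ennreal) auto

lemma exp_ennreal_ennreal: "0 \<le> p \<Longrightarrow> exp_ennreal (ennreal p) = ennreal (exp p)"
proof -
  assume p: "0 \<le> p"
  have "exp_ennreal (ennreal p) = (\<Sum>n. ennreal (p ^ n / fact n))"
    unfolding exp_ennreal_def using p by (intro suminf_cong) (simp add: ennreal_power flip: ennreal_mult')
  also have "\<dots> = ennreal (\<Sum>n. p ^ n / fact n)"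
    using summable_exp_generic[of p] p by (intro suminf_ennreal2) (simp_all add: divide_inverse mult.commute)
  also have "(\<Sum>n. p ^ n / fact n) = exp p"
    by (simp add: exp_def divide_inverse mult.commute)
  finally show ?thesis .
qed

lemma exp_ennreal_top: "exp_ennreal \<top> = \<top>"
  using le_suminf_ennreal[of "\<lambda>n. ennreal (1 / fact n) * \<top> ^ n" 1]
  by (simp add: exp_ennreal_def top_unique)

lemma ereal_exp_enn2ereal: "ereal_exp (enn2ereal z) = exp_ennreal z"
  by (cases z) (simp_all add: ereal_exp_def enn2ereal_ennreal exp_ennreal_ennreal exp_ennreal_top)

lemma ereal_exp_mono: "a \<le> b \<Longrightarrow> ereal_exp a \<le> ereal_exp b"
  by (cases a; cases b) (auto simp: ereal_exp_def intro: ennreal_leI)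

lemma enn2ereal_diff_le: "enn2ereal a - enn2ereal b \<le> enn2ereal a"
  using enn2ereal_nonneg[of b] by (cases "enn2ereal a"; cases "enn2ereal b") auto

lemma (in prob_space) indep_var_distr_compose:
  assumes ind: "indep_var S X T Y" and f: "f \<in> measurable S N1" and g: "g \<in> measurable T N2"
  shows "distr M (N1 \<Otimes>\<^sub>M N2) (\<lambda>\<omega>. (f (X \<omega>), g (Y \<omega>)))
    = distr M N1 (\<lambda>\<omega>. f (X \<omega>)) \<Otimes>\<^sub>M distr M N2 (\<lambda>\<omega>. g (Y \<omega>))"
proof -
  have rv: "X \<in> measurable M S" "Y \<in> measurable M T"
    and eq: "distr M S X \<Otimes>\<^sub>M distr M T Y = distr M (S \<Otimes>\<^sub>M T) (\<lambda>x. (X x, Y x))"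
    using ind unfolding indep_var_distribution_eq by auto
  interpret PY: prob_space "distr M T Y"
    by (rule prob_space_distr[OF rv(2)])
  have sf: "sigma_finite_measure (distr (distr M T Y) N2 g)"
    using g by (intro prob_space_imp_sigma_finite PY.prob_space_distr) simp
  have "distr M N1 (\<lambda>\<omega>. f (X \<omega>)) \<Otimes>\<^sub>M distr M N2 (\<lambda>\<omega>. g (Y \<omega>))
      = distr (distr M S X) N1 f \<Otimes>\<^sub>M distr (distr M T Y) N2 g"
    using rv f g by (simp add: distr_distr comp_def)
  also have "\<dots> = distr (distr M S X \<Otimes>\<^sub>M distr M T Y) (N1 \<Otimes>\<^sub>M N2) (\<lambda>(x, y). (f x, g y))"
    using f g by (intro pair_measure_distr sf) simp_all
  also have "\<dots> = distr M (N1 \<Otimes>\<^sub>M N2) (\<lambda>\<omega>. (f (X \<omega>), g (Y \<omega>)))"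
    unfolding eq using rv f g by (subst distr_distr) (auto simp: comp_def)
  finally show ?thesis ..
qed

lemma LIMSEQ_floor_mult_div: "(\<lambda>k::nat. real_of_int \<lfloor>r * real (Suc k)\<rfloor> / real (Suc k)) \<longlonglongrightarrow> r"
proof (rule tendsto_sandwich[of "\<lambda>k. r - 1 / real (Suc k)" _ _ "\<lambda>k. r"])
  show "\<forall>\<^sub>F k in sequentially. r - 1 / real (Suc k) \<le> real_of_int \<lfloor>r * real (Suc k)\<rfloor> / real (Suc k)"
  proof (intro always_eventually allI)
    fix k :: nat
    have "(r * real (Suc k) - 1) / real (Suc k) \<le> real_of_int \<lfloor>r * real (Suc k)\<rfloor> / real (Suc k)"
      by (intro divide_right_mono) linarith+
    then show "r - 1 / real (Suc k) \<le> real_of_int \<lfloor>r * real (Suc k)\<rfloor> / real (Suc k)"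
      by (simp add: diff_divide_distrib)
  qed
  show "\<forall>\<^sub>F k in sequentially. real_of_int \<lfloor>r * real (Suc k)\<rfloor> / real (Suc k) \<le> r"
    by (intro always_eventually allI) (simp add: field_simps)
  show "(\<lambda>k. r - 1 / real (Suc k)) \<longlonglongrightarrow> r"
    using tendsto_diff[OF tendsto_const LIMSEQ_Suc[OF lim_const_over_n[of 1]], of r] by simp
qed simp

text \<open>Joint measurability of a process with continuous paths, by approximating the time
  parameter from below on the grids \<open>\<int>/(k+1)\<close>.\<close>
lemma borel_measurable_continuous_process:
  fixes Z :: "real \<Rightarrow> 'w \<Rightarrow> 'a::metric_space"
  assumes meas: "\<And>t. 0 \<le> t \<Longrightarrow> Z t \<in> borel_measurable M"
    and cont: "\<And>\<omega>. \<omega> \<in> space M \<Longrightarrow> continuous_on {0..} (\<lambda>t. Z t \<omega>)"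
  shows "(\<lambda>p. Z (max 0 (fst p)) (snd p)) \<in> borel_measurable (borel \<Otimes>\<^sub>M M)"
proof (rule borel_measurable_LIMSEQ_metric)
  fix k :: nat
  have grid: "(\<lambda>p::real \<times> 'w. \<lfloor>fst p * real (Suc k)\<rfloor>) \<in> measurable (borel \<Otimes>\<^sub>M M) (count_space UNIV)"
    by (rule measurable_compose[OF _ measurable_real_floor]) measurable
  have slice: "(\<lambda>p. Z (max 0 (real_of_int i / real (Suc k))) (snd p)) \<in> borel_measurable (borel \<Otimes>\<^sub>M M)"
    for i :: int
    by (rule measurable_compose[OF measurable_snd meas]) simp
  show "(\<lambda>p. Z (max 0 (real_of_int \<lfloor>fst p * real (Suc k)\<rfloor> / real (Suc k))) (snd p))
      \<in> borel_measurable (borel \<Otimes>\<^sub>M M)"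
    by (rule measurable_compose_countable[OF slice grid])
next
  fix p :: "real \<times> 'w"
  assume "p \<in> space (borel \<Otimes>\<^sub>M M)"
  then have \<omega>: "snd p \<in> space M"
    by (auto simp: space_pair_measure)
  have "(\<lambda>k. max 0 (real_of_int \<lfloor>fst p * real (Suc k)\<rfloor> / real (Suc k))) \<longlonglongrightarrow> max 0 (fst p)"
    by (intro tendsto_max tendsto_const LIMSEQ_floor_mult_div)
  then show "(\<lambda>k. Z (max 0 (real_of_int \<lfloor>fst p * real (Suc k)\<rfloor> / real (Suc k))) (snd p))
      \<longlonglongrightarrow> Z (max 0 (fst p)) (snd p)"
    by (rule continuous_on_tendsto_compose[OF cont[OF \<omega>]]) auto
qed

lemma obtain_increasing_enumeration:
  fixes S :: "real set"
  assumes "finite S" and "0 \<in> S" and "u \<in> S" and "S \<subseteq> {0..u}" and "u < r"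
  obtains t :: "nat \<Rightarrow> real" and m :: nat
  where "0 < m" "t 0 = 0" "\<forall>i<m. t i < t (Suc i)" "t (m - 1) = u" "t m = r"
    "\<And>\<tau>. \<tau> \<in> S \<Longrightarrow> \<exists>i<m. t i = \<tau>"
proof -
  define L where "L = sorted_list_of_set S"
  define m where "m = length L"
  have setL: "set L = S"
    using assms(1) by (simp add: L_def)
  have m: "0 < m"
    using setL assms(2) by (cases L) (auto simp: m_def)
  have L_in: "i < m \<Longrightarrow> L ! i \<in> S" for i
    using setL by (auto simp: m_def)
  have L_less: "i < j \<Longrightarrow> j < m \<Longrightarrow> L ! i < L ! j" for i j
    using sorted_wrt_nth_less[OF strict_sorted_list_of_set[of S, folded L_def]] by (auto simp: m_def)
  have L_mono: "i \<le> j \<Longrightarrow> j < m \<Longrightarrow> L ! i \<le> L ! j" for i j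
    using sorted_nth_mono[OF sorted_sorted_list_of_set[of S, folded L_def]] by (auto simp: m_def)
  have L_index: "\<exists>i<m. L ! i = \<tau>" if "\<tau> \<in> S" for \<tau>
    using that setL by (auto simp: m_def in_set_conv_nth)
  have "L ! 0 = 0"
  proof -
    obtain j where "j < m" "L ! j = 0"
      using L_index[OF assms(2)] by blast
    then have "L ! 0 \<le> 0"
      using L_mono[of 0 j] by simp
    moreover have "0 \<le> L ! 0"
      using L_in[OF m] assms(4) by auto
    ultimately show ?thesis by simp
  qed
  moreover have L_last: "L ! (m - 1) = u"
  proof -
    obtain j where "j < m" "L ! j = u"
      using L_index[OF assms(3)] by blast
    then have "u \<le> L ! (m - 1)"
      using L_mono[of j "m - 1"] by simp
    moreover have "L ! (m - 1) \<le> u"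
      using L_in[of "m - 1"] m assms(4) by auto
    ultimately show ?thesis by simp
  qed
  moreover have "(if i < m then L ! i else r) < (if Suc i < m then L ! Suc i else r)" if "i < m" for i
  proof (cases "Suc i < m")
    case True
    then show ?thesis
      using that L_less[of i "Suc i"] by simp
  next
    case False
    then have "i = m - 1"
      using that by linarith
    then show ?thesis
      using False that L_last assms(5) by simp
  qed
  ultimately show ?thesis
    using m L_index by (intro that[of m "\<lambda>i. if i < m then L ! i else r"]) auto
qed

section \<open>Two independent Brownian motions\<close>

locale brownian_pair =
  fixes M :: "'w measure" and B B' :: "real \<Rightarrow> 'w \<Rightarrow> 'a::euclidean_space" and x y :: 'a
  assumes BM: "is_BM M B x" and BM': "is_BM M B' y" and indep: "indep_processes M B B'"

sublocale brownian_pair \<subseteq> prob_space M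
  using BM[unfolded is_BM_def] by (rule conjunct1)

context brownian_pair
begin

lemma B_measurable: "0 \<le> t \<Longrightarrow> B t \<in> borel_measurable M"
  and B'_measurable: "0 \<le> t \<Longrightarrow> B' t \<in> borel_measurable M"
  and B_continuous: "\<omega> \<in> space M \<Longrightarrow> continuous_on {0..} (\<lambda>t. B t \<omega>)"
  and B'_continuous: "\<omega> \<in> space M \<Longrightarrow> continuous_on {0..} (\<lambda>t. B' t \<omega>)"
  and B_0: "\<omega> \<in> space M \<Longrightarrow> B 0 \<omega> = x"
  using BM[unfolded is_BM_def, THEN conjunct2, THEN conjunct1]
    BM[unfolded is_BM_def, THEN conjunct2, THEN conjunct2, THEN conjunct1]
    BM'[unfolded is_BM_def, THEN conjunct2, THEN conjunct1]
    BM'[unfolded is_BM_def, THEN conjunct2, THEN conjunct2, THEN conjunct1]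
  by auto

lemma BM_increments:
  assumes "t 0 = 0" and "\<forall>i<n. t i < t (Suc i)"
  shows "indep_vars (\<lambda>_. borel) (\<lambda>i \<omega>. B (t (Suc i)) \<omega> - B (t i) \<omega>) {..<n} \<and>
    (\<forall>i<n. distr M borel (\<lambda>\<omega>. B (t (Suc i)) \<omega> - B (t i) \<omega>)
      = density lborel (\<lambda>z. ennreal (heat_kernel (t (Suc i) - t i) z)))"
  using BM[unfolded is_BM_def, THEN conjunct2, THEN conjunct2, THEN conjunct2, rule_format, OF conjI[OF assms]] .

abbreviation path_space :: "(real \<Rightarrow> 'a) measure" where
  "path_space \<equiv> PiM {0..} (\<lambda>_. borel)"

lemma measurable_restrict_B:
  "T \<subseteq> {0..} \<Longrightarrow> (\<lambda>\<omega>. restrict (\<lambda>t. B t \<omega>) T) \<in> measurable M (PiM T (\<lambda>_. borel))"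
  by (auto intro!: measurable_restrict B_measurable)

lemma measurable_restrict_B':
  "T \<subseteq> {0..} \<Longrightarrow> (\<lambda>\<omega>. restrict (\<lambda>t. B' t \<omega>) T) \<in> measurable M (PiM T (\<lambda>_. borel))"
  by (auto intro!: measurable_restrict B'_measurable)

lemma measurable_increment: "0 \<le> u \<Longrightarrow> 0 \<le> r \<Longrightarrow> (\<lambda>\<omega>. B r \<omega> - B u \<omega>) \<in> borel_measurable M"
  by (intro borel_measurable_diff B_measurable)

lemma distr_increment:
  assumes "0 \<le> u" and "u < r"
  shows "distr M borel (\<lambda>\<omega>. B r \<omega> - B u \<omega>) = density lborel (\<lambda>z. ennreal (heat_kernel (r - u) z))"
proof -
  obtain t m where m: "0 < m" and t: "t 0 = 0" "\<forall>i<m. t i < t (Suc i)" "t (m - 1) = u" "t m = r"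
    and "\<And>\<tau>. \<tau> \<in> {0, u} \<Longrightarrow> \<exists>i<m. t i = \<tau>"
    by (rule obtain_increasing_enumeration[of "{0, u}" u r]) (use assms in auto)
  then show ?thesis
    using BM_increments[OF t(1,2), THEN conjunct2, rule_format, of "m - 1"] by simp
qed

text \<open>The total mass of the Gaussian kernel is read off from the law of an increment.\<close>
lemma nn_integral_heat_kernel_eq_1:
  assumes "0 < s"
  shows "(\<integral>\<^sup>+z. ennreal (heat_kernel s (z::'a)) \<partial>lborel) = 1"
proof -
  interpret increment: prob_space "distr M borel (\<lambda>\<omega>. B s \<omega> - B 0 \<omega>)"
    using assms by (intro prob_space_distr measurable_increment) auto
  show ?thesis
    using increment.emeasure_space_1 distr_increment[of 0 s] assms
    by (simp add: emeasure_density)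
qed

text \<open>The past \<open>(B t)\<^sub>t\<^sub>\<in>\<^sub>T\<close> is a function of the increments of \<open>B\<close> over a partition of
  \<open>[0, u]\<close> refining \<open>T\<close>, which are independent of the increment over \<open>[u, r]\<close>.
  Both sides of \<open>indep_var\<close> must have the same type, so the increment is wrapped as a path
  indexed by \<open>{0}\<close>.\<close>
lemma indep_var_past_increment:
  assumes "0 \<le> u" and "u < r" and "finite T" and "T \<subseteq> {0..u}"
  shows "indep_var (PiM T (\<lambda>_. borel)) (\<lambda>\<omega>. restrict (\<lambda>t. B t \<omega>) T)
    (PiM {0} (\<lambda>_. borel)) (\<lambda>\<omega>. restrict (\<lambda>_. B r \<omega> - B u \<omega>) {0::real})"
proof -
  obtain t m where m: "0 < m" and t0: "t 0 = 0" and t_inc: "\<forall>i<m. t i < t (Suc i)"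
    and t_last: "t (m - 1) = u" "t m = r" and t_onto: "\<And>\<tau>. \<tau> \<in> insert 0 (insert u T) \<Longrightarrow> \<exists>i<m. t i = \<tau>"
    by (rule obtain_increasing_enumeration[of "insert 0 (insert u T)" u r]) (use assms in auto)
  define \<Delta> where "\<Delta> i \<omega> = B (t (Suc i)) \<omega> - B (t i) \<omega>" for i \<omega>
  have indep_\<Delta>: "indep_vars (\<lambda>_. borel) \<Delta> {..<m}"
    unfolding \<Delta>_def by (rule BM_increments[OF t0 t_inc, THEN conjunct1])
  define idx where "idx \<tau> = (SOME i. i < m \<and> t i = \<tau>)" for \<tau>
  have idx: "idx \<tau> < m \<and> t (idx \<tau>) = \<tau>" if "\<tau> \<in> T" for \<tau>
  proof -
    have "\<exists>i. i < m \<and> t i = \<tau>"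
      using t_onto[of \<tau>] that by auto
    then show ?thesis
      unfolding idx_def by (rule someI_ex)
  qed
  define \<Phi> where "\<Phi> \<delta> = restrict (\<lambda>\<tau>. x + (\<Sum>i<idx \<tau>. \<delta> i)) T" for \<delta> :: "nat \<Rightarrow> 'a"
  have "\<Phi> \<in> measurable (PiM {..<m - 1} (\<lambda>_. borel)) (PiM T (\<lambda>_. borel))"
    unfolding \<Phi>_def
  proof (rule measurable_restrict)
    fix \<tau> assume "\<tau> \<in> T"
    then have "idx \<tau> \<le> m - 1"
      using idx[of \<tau>] by linarith
    then show "(\<lambda>\<delta>. x + (\<Sum>i<idx \<tau>. \<delta> i)) \<in> borel_measurable (PiM {..<m - 1} (\<lambda>_. borel))"
      by (intro borel_measurable_add borel_measurable_const borel_measurable_sum measurable_component_singleton) auto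
  qed
  moreover have "(\<lambda>\<delta>. restrict (\<lambda>_. \<delta> (m - 1)) {0::real})
      \<in> measurable (PiM {m - 1} (\<lambda>_. borel)) (PiM {0} (\<lambda>_. borel :: 'a measure))"
    by (intro measurable_restrict measurable_component_singleton) simp
  moreover have "indep_var (PiM {..<m - 1} (\<lambda>_. borel)) (\<lambda>\<omega>. restrict (\<lambda>i. \<Delta> i \<omega>) {..<m - 1})
      (PiM {m - 1} (\<lambda>_. borel)) (\<lambda>\<omega>. restrict (\<lambda>i. \<Delta> i \<omega>) {m - 1})"
    using indep_\<Delta> m by (intro indep_var_restrict) auto
  ultimately have "indep_var (PiM T (\<lambda>_. borel)) (\<Phi> \<circ> (\<lambda>\<omega>. restrict (\<lambda>i. \<Delta> i \<omega>) {..<m - 1}))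
      (PiM {0} (\<lambda>_. borel)) ((\<lambda>\<delta>. restrict (\<lambda>_. \<delta> (m - 1)) {0::real}) \<circ> (\<lambda>\<omega>. restrict (\<lambda>i. \<Delta> i \<omega>) {m - 1}))"
    by (intro indep_var_compose)
  then show ?thesis
  proof (rule indep_var_cong)
    fix \<omega> assume \<omega>: "\<omega> \<in> space M"
    have "x + (\<Sum>i<idx \<tau>. restrict (\<lambda>i. \<Delta> i \<omega>) {..<m - 1} i) = B \<tau> \<omega>" if "\<tau> \<in> T" for \<tau>
    proof -
      have "(\<Sum>i<idx \<tau>. restrict (\<lambda>i. \<Delta> i \<omega>) {..<m - 1} i) = (\<Sum>i<idx \<tau>. \<Delta> i \<omega>)"
        using idx[OF that] by (intro sum.cong) auto
      also have "\<dots> = B (t (idx \<tau>)) \<omega> - B (t 0) \<omega>"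
        unfolding \<Delta>_def by (rule sum_lessThan_telescope)
      finally show ?thesis
        using idx[OF that] B_0[OF \<omega>] t0 by simp
    qed
    then show "(\<Phi> \<circ> (\<lambda>\<omega>. restrict (\<lambda>i. \<Delta> i \<omega>) {..<m - 1})) \<omega> = restrict (\<lambda>t. B t \<omega>) T"
      by (auto simp: \<Phi>_def fun_eq_iff)
    show "((\<lambda>\<delta>. restrict (\<lambda>_. \<delta> (m - 1)) {0::real}) \<circ> (\<lambda>\<omega>. restrict (\<lambda>i. \<Delta> i \<omega>) {m - 1})) \<omega>
        = restrict (\<lambda>_. B r \<omega> - B u \<omega>) {0}"
      using t_last m by (simp add: \<Delta>_def fun_eq_iff)
  qed
qed

definition paths :: "real set \<Rightarrow> 'w \<Rightarrow> (real \<Rightarrow> 'a) \<times> (real \<Rightarrow> 'a)" where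
  "paths T \<omega> = (restrict (\<lambda>t. B t \<omega>) T, restrict (\<lambda>t. B' t \<omega>) {0..})"

lemma measurable_paths: "T \<subseteq> {0..} \<Longrightarrow> paths T \<in> measurable M (PiM T (\<lambda>_. borel) \<Otimes>\<^sub>M path_space)"
  unfolding paths_def by (intro measurable_Pair measurable_restrict_B measurable_restrict_B') auto

lemma measurable_restrict_paths:
  assumes "\<Psi> \<in> borel_measurable (PiM T (\<lambda>_. borel) \<Otimes>\<^sub>M path_space)" and "T \<subseteq> T'"
  shows "(\<lambda>p. \<Psi> (restrict (fst p) T, snd p)) \<in> borel_measurable (PiM T' (\<lambda>_. borel) \<Otimes>\<^sub>M path_space)"
  using assms(2)
  by (intro measurable_compose[OF _ assms(1)] measurable_Pair
      measurable_compose[OF measurable_fst measurable_restrict_subset] measurable_snd)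

lemma restrict_paths: "T \<subseteq> T' \<Longrightarrow> (restrict (fst (paths T' \<omega>)) T, snd (paths T' \<omega>)) = paths T \<omega>"
  by (auto simp: paths_def fun_eq_iff)

lemma nn_integral_split_past_increment:
  assumes "0 \<le> u" and "u < r" and "finite T" and "T \<subseteq> {0..u}"
    and G: "G \<in> borel_measurable ((PiM T (\<lambda>_. borel) \<Otimes>\<^sub>M borel) \<Otimes>\<^sub>M path_space)"
  shows "(\<integral>\<^sup>+\<omega>. G ((restrict (\<lambda>t. B t \<omega>) T, B r \<omega> - B u \<omega>), restrict (\<lambda>t. B' t \<omega>) {0..}) \<partial>M)
    = (\<integral>\<^sup>+w. \<integral>\<^sup>+a. \<integral>\<^sup>+z. G ((a, z), w) \<partial>distr M borel (\<lambda>\<omega>. B r \<omega> - B u \<omega>)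
         \<partial>distr M (PiM T (\<lambda>_. borel)) (\<lambda>\<omega>. restrict (\<lambda>t. B t \<omega>) T) \<partial>distr M path_space (\<lambda>\<omega>. restrict (\<lambda>t. B' t \<omega>) {0..}))"
proof -
  let ?X = "\<lambda>\<omega>. restrict (\<lambda>t. B t \<omega>) T"
  let ?D = "\<lambda>\<omega>. B r \<omega> - B u \<omega>"
  let ?W = "\<lambda>\<omega>. restrict (\<lambda>t. B' t \<omega>) {0..}"
  let ?PX = "distr M (PiM T (\<lambda>_. borel)) ?X"
  let ?PD = "distr M borel ?D"
  let ?PW = "distr M path_space ?W"
  let ?PXD = "distr M (PiM T (\<lambda>_. borel) \<Otimes>\<^sub>M borel) (\<lambda>\<omega>. (?X \<omega>, ?D \<omega>))"
  have "T \<subseteq> {0..}"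
    using assms(4) by auto
  then have X: "?X \<in> measurable M (PiM T (\<lambda>_. borel))"
    by (rule measurable_restrict_B)
  have W: "?W \<in> measurable M path_space"
    by (rule measurable_restrict_B') simp
  have D: "?D \<in> borel_measurable M"
    using assms(1,2) by (intro measurable_increment) auto
  interpret PD: prob_space ?PD
    using D by (rule prob_space_distr)
  interpret PXD: prob_space ?PXD
    by (intro prob_space_distr measurable_Pair X D)
  interpret PW: prob_space ?PW
    using W by (rule prob_space_distr)
  interpret PXD_W: pair_prob_space ?PXD ?PW ..
  define \<Theta> where "\<Theta> p = (restrict p T, p r - p u)" for p :: "real \<Rightarrow> 'a"
  have \<Theta>: "\<Theta> \<in> measurable path_space (PiM T (\<lambda>_. borel) \<Otimes>\<^sub>M borel)"
    unfolding \<Theta>_def using assms(1,2,4)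
    by (intro measurable_Pair measurable_restrict_subset borel_measurable_diff measurable_component_singleton) auto
  have "(\<lambda>\<omega>. (\<Theta> (restrict (\<lambda>t. B t \<omega>) {0..}), id (restrict (\<lambda>t. B' t \<omega>) {0..})))
      = (\<lambda>\<omega>. ((?X \<omega>, ?D \<omega>), ?W \<omega>))"
    and "(\<lambda>\<omega>. \<Theta> (restrict (\<lambda>t. B t \<omega>) {0..})) = (\<lambda>\<omega>. (?X \<omega>, ?D \<omega>))"
    using assms(1,2,4) by (auto simp: \<Theta>_def fun_eq_iff)
  with indep_var_distr_compose[OF indep[unfolded indep_processes_def] \<Theta> measurable_ident[of path_space]]
  have joint: "distr M ((PiM T (\<lambda>_. borel) \<Otimes>\<^sub>M borel) \<Otimes>\<^sub>M path_space) (\<lambda>\<omega>. ((?X \<omega>, ?D \<omega>), ?W \<omega>)) = ?PXD \<Otimes>\<^sub>M ?PW"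
    by (simp add: id_def)
  have "?PXD = ?PX \<Otimes>\<^sub>M ?PD"
    using indep_var_distr_compose[OF indep_var_past_increment[OF assms(1-4)] measurable_ident
        measurable_component_singleton[of 0 "{0::real}" "\<lambda>_. borel :: 'a measure"]]
    by (simp add: id_def)
  then have "(\<integral>\<^sup>+v. G (v, w) \<partial>?PXD) = (\<integral>\<^sup>+a. \<integral>\<^sup>+z. G ((a, z), w) \<partial>?PD \<partial>?PX)" if "w \<in> space path_space" for w
    using that G by (simp add: PD.nn_integral_fst[symmetric] sets_pair_measure_cong[OF sets_distr sets_distr])
  moreover have "(\<integral>\<^sup>+\<omega>. G ((?X \<omega>, ?D \<omega>), ?W \<omega>) \<partial>M)
      = (\<integral>\<^sup>+q. G q \<partial>distr M ((PiM T (\<lambda>_. borel) \<Otimes>\<^sub>M borel) \<Otimes>\<^sub>M path_space) (\<lambda>\<omega>. ((?X \<omega>, ?D \<omega>), ?W \<omega>)))"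
    by (rule nn_integral_distr[symmetric]) (use X D W G in measurable)
  moreover have "(\<integral>\<^sup>+q. G q \<partial>?PXD \<Otimes>\<^sub>M ?PW) = (\<integral>\<^sup>+w. \<integral>\<^sup>+v. G (v, w) \<partial>?PXD \<partial>?PW)"
    using G by (intro PXD_W.nn_integral_snd[symmetric])
      (simp add: measurable_cong_sets[OF sets_pair_measure_cong[OF sets_distr sets_distr] refl])
  ultimately show ?thesis
    unfolding joint by (auto intro!: nn_integral_cong)
qed

lemma nn_integral_polydecay_increment_le:
  fixes \<beta> :: real
  assumes "0 \<le> u" and "u < r" and "0 < \<beta>" and "\<beta> < DIM('a)"
  shows "(\<integral>\<^sup>+z. ennreal (polydecay \<beta> (v + z)) \<partial>distr M borel (\<lambda>\<omega>. B r \<omega> - B u \<omega>))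
    \<le> ennreal (heat_profile \<beta> DIM('a) (r - u))"
proof -
  have "(\<integral>\<^sup>+z. ennreal (polydecay \<beta> (v + z)) \<partial>distr M borel (\<lambda>\<omega>. B r \<omega> - B u \<omega>))
      = (\<integral>\<^sup>+z. ennreal (heat_kernel (r - u) z) * ennreal (polydecay \<beta> (v + z)) \<partial>lborel)"
    using assms(1,2) by (simp add: distr_increment nn_integral_density)
  also have "\<dots> \<le> ennreal (heat_profile \<beta> DIM('a) (r - u))"
    using assms nn_integral_heat_kernel_eq_1[of "r - u"]
    by (intro nn_integral_heat_kernel_polydecay_le_profile) auto
  finally show ?thesis .
qed

text \<open>The Markov property at time \<open>u\<close>: averaging \<open>polydecay \<beta> (B r - B' r)\<close> over the
  Gaussian increment \<open>B r - B u\<close> costs at most \<open>heat_profile \<beta> d (r - u)\<close>, whatever the past.\<close>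
lemma markov_step_le_strict:
  fixes \<beta> :: real
  assumes "0 \<le> u" and "u < r" and "finite T" and "T \<subseteq> {0..u}" and "u \<in> T"
    and \<beta>: "0 < \<beta>" "\<beta> < DIM('a)"
    and \<Psi>: "\<Psi> \<in> borel_measurable (PiM T (\<lambda>_. borel) \<Otimes>\<^sub>M path_space)"
  shows "(\<integral>\<^sup>+\<omega>. \<Psi> (paths T \<omega>) * ennreal (polydecay \<beta> (B r \<omega> - B' r \<omega>)) \<partial>M)
    \<le> ennreal (heat_profile \<beta> DIM('a) (r - u)) * (\<integral>\<^sup>+\<omega>. \<Psi> (paths T \<omega>) \<partial>M)"
proof -
  let ?PD = "distr M borel (\<lambda>\<omega>. B r \<omega> - B u \<omega>)"
  let ?\<phi> = "ennreal (heat_profile \<beta> DIM('a) (r - u))"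
  define G1 where "G1 q = \<Psi> (fst (fst q), snd q) * ennreal (polydecay \<beta> (fst (fst q) u + snd (fst q) - snd q r))"
    for q :: "((real \<Rightarrow> 'a) \<times> 'a) \<times> (real \<Rightarrow> 'a)"
  define G2 where "G2 q = ?\<phi> * \<Psi> (fst (fst q), snd q)" for q :: "((real \<Rightarrow> 'a) \<times> 'a) \<times> (real \<Rightarrow> 'a)"
  have \<Psi>q: "(\<lambda>q. \<Psi> (fst (fst q), snd q)) \<in> borel_measurable ((PiM T (\<lambda>_. borel) \<Otimes>\<^sub>M borel) \<Otimes>\<^sub>M path_space)"
    by (rule measurable_compose[OF _ \<Psi>]) measurable
  have "(\<lambda>q. fst (fst q) u) \<in> borel_measurable ((PiM T (\<lambda>_. borel) \<Otimes>\<^sub>M borel) \<Otimes>\<^sub>M path_space)"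
    by (rule measurable_compose[OF _ measurable_component_singleton[OF assms(5)]]) measurable
  moreover have "(\<lambda>q. snd q r) \<in> borel_measurable ((PiM T (\<lambda>_. borel) \<Otimes>\<^sub>M borel) \<Otimes>\<^sub>M path_space)"
    using assms(1,2) by (intro measurable_compose[OF measurable_snd measurable_component_singleton]) auto
  ultimately have "(\<lambda>q. fst (fst q) u + snd (fst q) - snd q r) \<in> borel_measurable ((PiM T (\<lambda>_. borel) \<Otimes>\<^sub>M borel) \<Otimes>\<^sub>M path_space)"
    by measurable
  then have G1: "G1 \<in> borel_measurable ((PiM T (\<lambda>_. borel) \<Otimes>\<^sub>M borel) \<Otimes>\<^sub>M path_space)"
    and G2: "G2 \<in> borel_measurable ((PiM T (\<lambda>_. borel) \<Otimes>\<^sub>M borel) \<Otimes>\<^sub>M path_space)"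
    unfolding G1_def G2_def using \<Psi>q by measurable
  interpret PD: prob_space ?PD
    using assms(1,2) by (intro prob_space_distr measurable_increment) auto
  have inner: "(\<integral>\<^sup>+z. G1 ((a, z), w) \<partial>?PD) \<le> (\<integral>\<^sup>+z. G2 ((a, z), w) \<partial>?PD)" for a w
  proof -
    have "(\<integral>\<^sup>+z. G1 ((a, z), w) \<partial>?PD) = \<Psi> (a, w) * (\<integral>\<^sup>+z. ennreal (polydecay \<beta> (a u - w r + z)) \<partial>?PD)"
      unfolding G1_def by (simp add: algebra_simps nn_integral_cmult)
    also have "\<dots> \<le> \<Psi> (a, w) * ?\<phi>"
      using assms(1,2) \<beta> by (intro mult_left_mono nn_integral_polydecay_increment_le) auto
    also have "\<dots> = (\<integral>\<^sup>+z. G2 ((a, z), w) \<partial>?PD)"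
      using PD.emeasure_space_1 unfolding G2_def by (simp add: mult.commute)
    finally show ?thesis .
  qed
  have "(\<integral>\<^sup>+\<omega>. \<Psi> (paths T \<omega>) * ennreal (polydecay \<beta> (B r \<omega> - B' r \<omega>)) \<partial>M)
      = (\<integral>\<^sup>+\<omega>. G1 ((restrict (\<lambda>t. B t \<omega>) T, B r \<omega> - B u \<omega>), restrict (\<lambda>t. B' t \<omega>) {0..}) \<partial>M)"
    using assms(1,2,5) by (intro nn_integral_cong) (simp add: G1_def paths_def)
  also have "\<dots> \<le> (\<integral>\<^sup>+\<omega>. G2 ((restrict (\<lambda>t. B t \<omega>) T, B r \<omega> - B u \<omega>), restrict (\<lambda>t. B' t \<omega>) {0..}) \<partial>M)"
    unfolding nn_integral_split_past_increment[OF assms(1-4) G1] nn_integral_split_past_increment[OF assms(1-4) G2]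
    by (intro nn_integral_mono inner)
  also have "\<dots> = ?\<phi> * (\<integral>\<^sup>+\<omega>. \<Psi> (paths T \<omega>) \<partial>M)"
    unfolding G2_def fst_conv snd_conv paths_def[symmetric]
    using assms(4) by (intro nn_integral_cmult measurable_compose[OF measurable_paths \<Psi>]) auto
  finally show ?thesis .
qed

lemma markov_step_le:
  fixes \<beta> :: real
  assumes "0 \<le> u" and "u \<le> r" and "finite T" and "T \<subseteq> {0..u}"
    and \<beta>: "0 < \<beta>" "\<beta> < DIM('a)"
    and \<Psi>: "\<Psi> \<in> borel_measurable (PiM T (\<lambda>_. borel) \<Otimes>\<^sub>M path_space)"
  shows "(\<integral>\<^sup>+\<omega>. \<Psi> (paths T \<omega>) * ennreal (polydecay \<beta> (B r \<omega> - B' r \<omega>)) \<partial>M)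
    \<le> ennreal (heat_profile \<beta> DIM('a) (r - u)) * (\<integral>\<^sup>+\<omega>. \<Psi> (paths T \<omega>) \<partial>M)"
proof (cases "u = r")
  case True
  have "(\<integral>\<^sup>+\<omega>. \<Psi> (paths T \<omega>) * ennreal (polydecay \<beta> (B r \<omega> - B' r \<omega>)) \<partial>M) \<le> (\<integral>\<^sup>+\<omega>. \<Psi> (paths T \<omega>) \<partial>M)"
  proof (intro nn_integral_mono)
    fix \<omega>
    have "ennreal (polydecay \<beta> (B r \<omega> - B' r \<omega>)) \<le> 1"
      using polydecay_le_1[of \<beta>] \<beta> by simp
    then show "\<Psi> (paths T \<omega>) * ennreal (polydecay \<beta> (B r \<omega> - B' r \<omega>)) \<le> \<Psi> (paths T \<omega>)"
      using mult_left_mono[of _ 1 "\<Psi> (paths T \<omega>)"] by simp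
  qed
  then show ?thesis
    using True by (simp add: heat_profile_def)
next
  case False
  let ?\<Psi> = "\<lambda>p. \<Psi> (restrict (fst p) T, snd p)"
  have "(\<integral>\<^sup>+\<omega>. ?\<Psi> (paths (insert u T) \<omega>) * ennreal (polydecay \<beta> (B r \<omega> - B' r \<omega>)) \<partial>M)
      \<le> ennreal (heat_profile \<beta> DIM('a) (r - u)) * (\<integral>\<^sup>+\<omega>. ?\<Psi> (paths (insert u T) \<omega>) \<partial>M)"
    using assms False
    by (intro markov_step_le_strict measurable_restrict_paths[OF \<Psi>]) auto
  then show ?thesis
    by (simp add: restrict_paths subset_insertI)
qed

section \<open>Moments of the occupation functional\<close>

text \<open>Evaluating the paths at \<open>max 0 s\<close> extends them continuously to negative times.\<close>
definition path_decay :: "real \<Rightarrow> 'w \<Rightarrow> real \<Rightarrow> real" where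
  "path_decay \<beta> \<omega> s = polydecay \<beta> (B (max 0 s) \<omega> - B' (max 0 s) \<omega>)"

definition tail_occupation :: "real \<Rightarrow> real \<Rightarrow> 'w \<Rightarrow> ennreal" where
  "tail_occupation \<beta> u \<omega> = (\<integral>\<^sup>+s. ennreal (path_decay \<beta> \<omega> s) * indicator {u..} s \<partial>lborel)"

lemma continuous_on_path_decay: "\<omega> \<in> space M \<Longrightarrow> continuous_on UNIV (path_decay \<beta> \<omega>)"
  unfolding path_decay_def
  by (intro continuous_on_compose2[OF continuous_on_polydecay] continuous_on_diff
      continuous_on_compose2[OF B_continuous] continuous_on_compose2[OF B'_continuous] continuous_intros) auto

lemma borel_measurable_path_decay:
  "(\<lambda>p. ennreal (path_decay \<beta> (fst p) (snd p))) \<in> borel_measurable (M \<Otimes>\<^sub>M lborel)"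
proof -
  have swap: "(\<lambda>p. (snd p, fst p)) \<in> measurable (M \<Otimes>\<^sub>M lborel) (borel \<Otimes>\<^sub>M M)"
    by measurable
  have "(\<lambda>p. B (max 0 (snd p)) (fst p)) \<in> borel_measurable (M \<Otimes>\<^sub>M lborel)"
    and "(\<lambda>p. B' (max 0 (snd p)) (fst p)) \<in> borel_measurable (M \<Otimes>\<^sub>M lborel)"
    using measurable_compose[OF swap borel_measurable_continuous_process[OF B_measurable B_continuous]]
      measurable_compose[OF swap borel_measurable_continuous_process[OF B'_measurable B'_continuous]]
    by simp_all
  then show ?thesis
    unfolding path_decay_def
    by (intro measurable_compose[OF _ measurable_ennreal] measurable_compose[OF _ borel_measurable_polydecay]
        borel_measurable_diff)
qed

lemma borel_measurable_tail_occupation: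
  "(\<lambda>p. tail_occupation \<beta> (snd p) (fst p)) \<in> borel_measurable (M \<Otimes>\<^sub>M lborel)"
proof -
  have "(\<lambda>q. (fst (fst q), snd q)) \<in> measurable ((M \<Otimes>\<^sub>M lborel) \<Otimes>\<^sub>M lborel) (M \<Otimes>\<^sub>M lborel)"
    by measurable
  from measurable_compose[OF this borel_measurable_path_decay]
  have "(\<lambda>q. ennreal (path_decay \<beta> (fst (fst q)) (snd q))) \<in> borel_measurable ((M \<Otimes>\<^sub>M lborel) \<Otimes>\<^sub>M lborel)"
    by simp
  then have "(\<lambda>q. if snd (fst q) \<le> snd q then ennreal (path_decay \<beta> (fst (fst q)) (snd q)) else 0)
      \<in> borel_measurable ((M \<Otimes>\<^sub>M lborel) \<Otimes>\<^sub>M lborel)"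
    by measurable
  then have "(\<lambda>(p, s). ennreal (path_decay \<beta> (fst p) s) * indicator {snd p..} s)
      \<in> borel_measurable ((M \<Otimes>\<^sub>M lborel) \<Otimes>\<^sub>M lborel)"
    by (rule measurable_cong[THEN iffD1, rotated]) (auto simp: indicator_def)
  from lborel.borel_measurable_nn_integral[OF this] show ?thesis
    unfolding tail_occupation_def by simp
qed

lemma tail_occupation_power_le:
  assumes "\<omega> \<in> space M"
  shows "tail_occupation \<beta> u \<omega> ^ Suc n \<le> ennreal (real (Suc n))
    * (\<integral>\<^sup>+r. ennreal (path_decay \<beta> \<omega> r) * tail_occupation \<beta> r \<omega> ^ n * indicator {u..} r \<partial>lborel)"
  unfolding tail_occupation_def
  by (rule nn_integral_tail_power_le[OF continuous_on_path_decay[OF assms]]) (simp add: path_decay_def polydecay_nonneg)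

text \<open>One step of the moment recursion, at a fixed time \<open>r \<ge> u\<close>: the hypothesis on the
  \<open>n\<close>-th moment is applied with the past enlarged to \<open>insert r T\<close>, then the Markov property
  at time \<open>u\<close> removes the factor \<open>path_decay \<beta> \<omega> r\<close>.\<close>
lemma moment_integrand_le:
  fixes \<beta> :: real
  assumes moment: "\<And>u T \<Psi>. 0 \<le> u \<Longrightarrow> finite T \<Longrightarrow> T \<subseteq> {0..u} \<Longrightarrow>
      \<Psi> \<in> borel_measurable (PiM T (\<lambda>_. borel) \<Otimes>\<^sub>M path_space) \<Longrightarrow>
      (\<integral>\<^sup>+\<omega>. \<Psi> (paths T \<omega>) * tail_occupation \<beta> u \<omega> ^ n \<partial>M) \<le> ennreal c * (\<integral>\<^sup>+\<omega>. \<Psi> (paths T \<omega>) \<partial>M)"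
    and "0 \<le> u" and "u \<le> r" and "finite T" and "T \<subseteq> {0..u}"
    and \<beta>: "0 < \<beta>" "\<beta> < DIM('a)"
    and \<Psi>: "\<Psi> \<in> borel_measurable (PiM T (\<lambda>_. borel) \<Otimes>\<^sub>M path_space)"
  shows "(\<integral>\<^sup>+\<omega>. \<Psi> (paths T \<omega>) * (ennreal (path_decay \<beta> \<omega> r) * tail_occupation \<beta> r \<omega> ^ n) \<partial>M)
    \<le> ennreal c * (ennreal (heat_profile \<beta> DIM('a) (r - u)) * (\<integral>\<^sup>+\<omega>. \<Psi> (paths T \<omega>) \<partial>M))"
proof -
  define \<Psi>' where "\<Psi>' p = \<Psi> (restrict (fst p) T, snd p) * ennreal (polydecay \<beta> (fst p r - snd p r))"
    for p :: "(real \<Rightarrow> 'a) \<times> (real \<Rightarrow> 'a)"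
  have r: "0 \<le> r" "r \<in> insert r T" "insert r T \<subseteq> {0..r}"
    using assms(2,3,5) by auto
  have "(\<lambda>p. fst p r - snd p r) \<in> borel_measurable (PiM (insert r T) (\<lambda>_. borel) \<Otimes>\<^sub>M path_space)"
    using r by (intro borel_measurable_diff measurable_compose[OF measurable_fst measurable_component_singleton]
        measurable_compose[OF measurable_snd measurable_component_singleton]) auto
  then have \<Psi>': "\<Psi>' \<in> borel_measurable (PiM (insert r T) (\<lambda>_. borel) \<Otimes>\<^sub>M path_space)"
    unfolding \<Psi>'_def
    by (intro borel_measurable_times_ennreal measurable_restrict_paths[OF \<Psi> subset_insertI]
        measurable_compose[OF _ measurable_ennreal] measurable_compose[OF _ borel_measurable_polydecay])
  have \<Psi>'_paths: "\<Psi>' (paths (insert r T) \<omega>) = \<Psi> (paths T \<omega>) * ennreal (path_decay \<beta> \<omega> r)" for \<omega>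
    using r by (simp add: \<Psi>'_def restrict_paths subset_insertI path_decay_def) (simp add: paths_def)
  have "(\<integral>\<^sup>+\<omega>. \<Psi> (paths T \<omega>) * (ennreal (path_decay \<beta> \<omega> r) * tail_occupation \<beta> r \<omega> ^ n) \<partial>M)
      = (\<integral>\<^sup>+\<omega>. \<Psi>' (paths (insert r T) \<omega>) * tail_occupation \<beta> r \<omega> ^ n \<partial>M)"
    by (simp add: \<Psi>'_paths mult.assoc)
  also have "\<dots> \<le> ennreal c * (\<integral>\<^sup>+\<omega>. \<Psi> (paths T \<omega>) * ennreal (polydecay \<beta> (B r \<omega> - B' r \<omega>)) \<partial>M)"
    using moment[OF r(1) _ r(3) \<Psi>'] assms(4) by (simp add: \<Psi>'_paths path_decay_def r(1))
  also have "\<dots> \<le> ennreal c * (ennreal (heat_profile \<beta> DIM('a) (r - u)) * (\<integral>\<^sup>+\<omega>. \<Psi> (paths T \<omega>) \<partial>M))"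
    using assms(2-5) \<beta> \<Psi> by (intro mult_left_mono markov_step_le) auto
  finally show ?thesis .
qed

lemma nn_integral_mult_tail_occupation_Suc_le:
  assumes E: "E \<in> borel_measurable M"
  shows "(\<integral>\<^sup>+\<omega>. E \<omega> * tail_occupation \<beta> u \<omega> ^ Suc n \<partial>M)
    \<le> ennreal (real (Suc n)) * (\<integral>\<^sup>+r. (\<integral>\<^sup>+\<omega>. E \<omega> * (ennreal (path_decay \<beta> \<omega> r) * tail_occupation \<beta> r \<omega> ^ n) \<partial>M)
      * indicator {u..} r \<partial>lborel)"
proof -
  define H\<^sub>0 where "H\<^sub>0 p = ennreal (path_decay \<beta> (fst p) (snd p))
      * tail_occupation \<beta> (snd p) (fst p) ^ n * indicator {u..} (snd p)" for p
  define H where "H p = E (fst p) * H\<^sub>0 p" for p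
  have H\<^sub>0: "H\<^sub>0 \<in> borel_measurable (M \<Otimes>\<^sub>M lborel)"
    unfolding H\<^sub>0_def
    by (intro borel_measurable_times_ennreal borel_measurable_power_ennreal borel_measurable_path_decay
        borel_measurable_tail_occupation measurable_compose[OF measurable_snd borel_measurable_indicator]) simp
  have H: "H \<in> borel_measurable (M \<Otimes>\<^sub>M lborel)"
    unfolding H_def by (intro borel_measurable_times_ennreal H\<^sub>0 measurable_compose[OF measurable_fst E])
  have "(\<integral>\<^sup>+\<omega>. E \<omega> * tail_occupation \<beta> u \<omega> ^ Suc n \<partial>M)
      \<le> (\<integral>\<^sup>+\<omega>. ennreal (real (Suc n)) * (\<integral>\<^sup>+r. H (\<omega>, r) \<partial>lborel) \<partial>M)"
  proof (intro nn_integral_mono)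
    fix \<omega> assume \<omega>: "\<omega> \<in> space M"
    have "(\<integral>\<^sup>+r. H (\<omega>, r) \<partial>lborel)
        = E \<omega> * (\<integral>\<^sup>+r. ennreal (path_decay \<beta> \<omega> r) * tail_occupation \<beta> r \<omega> ^ n * indicator {u..} r \<partial>lborel)"
      using nn_integral_cmult[OF measurable_Pair2[OF H\<^sub>0 \<omega>], of "E \<omega>"]
      by (simp add: H_def H\<^sub>0_def)
    then show "E \<omega> * tail_occupation \<beta> u \<omega> ^ Suc n \<le> ennreal (real (Suc n)) * (\<integral>\<^sup>+r. H (\<omega>, r) \<partial>lborel)"
      using mult_left_mono[OF tail_occupation_power_le[OF \<omega>, of \<beta> u n], of "E \<omega>"]
      by (simp add: mult.left_commute)
  qed
  also have "\<dots> = ennreal (real (Suc n)) * (\<integral>\<^sup>+r. \<integral>\<^sup>+\<omega>. H (\<omega>, r) \<partial>M \<partial>lborel)"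
  proof -
    interpret pair_sigma_finite M lborel ..
    show ?thesis
      using H by (simp add: nn_integral_cmult lborel.borel_measurable_nn_integral Fubini')
  qed
  also have "(\<integral>\<^sup>+r. \<integral>\<^sup>+\<omega>. H (\<omega>, r) \<partial>M \<partial>lborel) = (\<integral>\<^sup>+r. (\<integral>\<^sup>+\<omega>. E \<omega> * (ennreal (path_decay \<beta> \<omega> r)
      * tail_occupation \<beta> r \<omega> ^ n) \<partial>M) * indicator {u..} r \<partial>lborel)"
    by (intro nn_integral_cong) (simp add: H_def H\<^sub>0_def indicator_def mult.assoc)
  finally show ?thesis .
qed

lemma moment_step:
  fixes \<beta> :: real
  defines "K \<equiv> green_const \<beta> DIM('a)"
  assumes \<beta>: "2 < \<beta>" "\<beta> < DIM('a)"
    and moment: "\<And>u T \<Psi>. 0 \<le> u \<Longrightarrow> finite T \<Longrightarrow> T \<subseteq> {0..u} \<Longrightarrow>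
      \<Psi> \<in> borel_measurable (PiM T (\<lambda>_. borel) \<Otimes>\<^sub>M path_space) \<Longrightarrow>
      (\<integral>\<^sup>+\<omega>. \<Psi> (paths T \<omega>) * tail_occupation \<beta> u \<omega> ^ n \<partial>M)
        \<le> ennreal (fact n * K ^ n) * (\<integral>\<^sup>+\<omega>. \<Psi> (paths T \<omega>) \<partial>M)"
    and u: "0 \<le> u" and T: "finite T" "T \<subseteq> {0..u}"
    and \<Psi>: "\<Psi> \<in> borel_measurable (PiM T (\<lambda>_. borel) \<Otimes>\<^sub>M path_space)"
  shows "(\<integral>\<^sup>+\<omega>. \<Psi> (paths T \<omega>) * tail_occupation \<beta> u \<omega> ^ Suc n \<partial>M)
    \<le> ennreal (fact (Suc n) * K ^ Suc n) * (\<integral>\<^sup>+\<omega>. \<Psi> (paths T \<omega>) \<partial>M)"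
proof -
  define c where "c = fact n * K ^ n"
  have K: "0 < K" and c: "0 \<le> c"
    using green_const_pos[OF \<beta>] by (simp_all add: K_def c_def)
  let ?E = "\<integral>\<^sup>+\<omega>. \<Psi> (paths T \<omega>) \<partial>M"
  have "(\<integral>\<^sup>+\<omega>. \<Psi> (paths T \<omega>) * tail_occupation \<beta> u \<omega> ^ Suc n \<partial>M)
      \<le> ennreal (real (Suc n)) * (\<integral>\<^sup>+r. (\<integral>\<^sup>+\<omega>. \<Psi> (paths T \<omega>) * (ennreal (path_decay \<beta> \<omega> r)
          * tail_occupation \<beta> r \<omega> ^ n) \<partial>M) * indicator {u..} r \<partial>lborel)"
    using T(2) by (intro nn_integral_mult_tail_occupation_Suc_le measurable_compose[OF measurable_paths \<Psi>]) auto
  also have "\<dots> \<le> ennreal (real (Suc n))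
      * (\<integral>\<^sup>+r. (ennreal c * ?E) * (ennreal (heat_profile \<beta> DIM('a) (r - u)) * indicator {u..} r) \<partial>lborel)"
  proof (intro mult_left_mono nn_integral_mono)
    fix r :: real
    show "(\<integral>\<^sup>+\<omega>. \<Psi> (paths T \<omega>) * (ennreal (path_decay \<beta> \<omega> r) * tail_occupation \<beta> r \<omega> ^ n) \<partial>M)
        * indicator {u..} r \<le> (ennreal c * ?E) * (ennreal (heat_profile \<beta> DIM('a) (r - u)) * indicator {u..} r)"
    proof (cases "u \<le> r")
      case True
      then have "(\<integral>\<^sup>+\<omega>. \<Psi> (paths T \<omega>) * (ennreal (path_decay \<beta> \<omega> r) * tail_occupation \<beta> r \<omega> ^ n) \<partial>M)
          \<le> ennreal c * (ennreal (heat_profile \<beta> DIM('a) (r - u)) * ?E)"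
        unfolding c_def using u T \<Psi> \<beta> by (intro moment_integrand_le[OF moment]) auto
      then show ?thesis
        using True by (simp add: mult_ac)
    qed simp
  qed simp
  also have "\<dots> = ennreal (real (Suc n)) * (ennreal c * ?E
      * (\<integral>\<^sup>+r. ennreal (heat_profile \<beta> DIM('a) (r - u)) * indicator {u..} r \<partial>lborel))"
    by (subst nn_integral_cmult) auto
  also have "\<dots> \<le> ennreal (real (Suc n)) * (ennreal c * ?E * ennreal K)"
    unfolding K_def using \<beta> by (intro mult_left_mono nn_integral_heat_profile_shift_le) auto
  also have "\<dots> = ennreal (real (Suc n) * c * K) * ?E"
    using K c by (simp add: ennreal_mult mult_ac)
  also have "real (Suc n) * c * K = fact (Suc n) * K ^ Suc n"
    by (simp add: c_def algebra_simps)
  finally show ?thesis .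
qed

lemma tail_occupation_moment_le:
  fixes \<beta> :: real
  assumes "2 < \<beta>" and "\<beta> < DIM('a)" and "0 \<le> u" and "finite T" and "T \<subseteq> {0..u}"
    and "\<Psi> \<in> borel_measurable (PiM T (\<lambda>_. borel) \<Otimes>\<^sub>M path_space)"
  shows "(\<integral>\<^sup>+\<omega>. \<Psi> (paths T \<omega>) * tail_occupation \<beta> u \<omega> ^ n \<partial>M)
    \<le> ennreal (fact n * green_const \<beta> DIM('a) ^ n) * (\<integral>\<^sup>+\<omega>. \<Psi> (paths T \<omega>) \<partial>M)"
  using assms(3-)
proof (induction n arbitrary: u T \<Psi>)
  case 0
  then show ?case by simp
next
  case (Suc n)
  show ?case
    using assms(1,2) Suc.prems by (intro moment_step Suc.IH) auto
qed

lemma borel_measurable_tail_occupation_0: "tail_occupation \<beta> 0 \<in> borel_measurable M"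
proof -
  have "(\<lambda>\<omega>. (\<omega>, 0 :: real)) \<in> measurable M (M \<Otimes>\<^sub>M lborel)"
    by (rule measurable_Pair2') simp
  from measurable_compose[OF this borel_measurable_tail_occupation] show ?thesis
    by simp
qed

text \<open>Khas'minskii's argument: the moment bound makes the exponential series of
  \<open>l \<cdot> tail_occupation \<beta> 0\<close> dominated by the geometric series \<open>\<Sum> (l K)^n\<close>.\<close>
lemma exp_tail_occupation_le_2:
  fixes \<beta> l :: real
  assumes "2 < \<beta>" and "\<beta> < DIM('a)" and "0 \<le> l" and "l * green_const \<beta> DIM('a) \<le> 1/2"
  shows "(\<integral>\<^sup>+\<omega>. exp_ennreal (ennreal l * tail_occupation \<beta> 0 \<omega>) \<partial>M) \<le> 2"
proof -
  define K where "K = green_const \<beta> DIM('a)"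
  have K: "0 < K"
    unfolding K_def using assms green_const_pos by simp
  have moment: "(\<integral>\<^sup>+\<omega>. tail_occupation \<beta> 0 \<omega> ^ n \<partial>M) \<le> ennreal (fact n * K ^ n)" for n
    using tail_occupation_moment_le[OF assms(1,2), of 0 "{}" "\<lambda>_. 1" n]
    by (simp add: K_def emeasure_space_1)
  have F: "tail_occupation \<beta> 0 \<in> borel_measurable M"
    by (rule borel_measurable_tail_occupation_0)
  have "(\<integral>\<^sup>+\<omega>. exp_ennreal (ennreal l * tail_occupation \<beta> 0 \<omega>) \<partial>M)
      = (\<Sum>n. \<integral>\<^sup>+\<omega>. ennreal (1 / fact n) * (ennreal l * tail_occupation \<beta> 0 \<omega>) ^ n \<partial>M)"
    unfolding exp_ennreal_def
    by (intro nn_integral_suminf borel_measurable_times_ennreal borel_measurable_const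
        borel_measurable_power_ennreal F)
  also have "\<dots> = (\<Sum>n. ennreal (1 / fact n) * ennreal (l ^ n) * (\<integral>\<^sup>+\<omega>. tail_occupation \<beta> 0 \<omega> ^ n \<partial>M))"
  proof (intro suminf_cong)
    fix n
    have "(\<lambda>\<omega>. ennreal (1 / fact n) * (ennreal l * tail_occupation \<beta> 0 \<omega>) ^ n)
        = (\<lambda>\<omega>. (ennreal (1 / fact n) * ennreal (l ^ n)) * tail_occupation \<beta> 0 \<omega> ^ n)"
      by (simp only: power_mult_distrib ennreal_power[OF assms(3)] mult.assoc)
    then show "(\<integral>\<^sup>+\<omega>. ennreal (1 / fact n) * (ennreal l * tail_occupation \<beta> 0 \<omega>) ^ n \<partial>M)
        = ennreal (1 / fact n) * ennreal (l ^ n) * (\<integral>\<^sup>+\<omega>. tail_occupation \<beta> 0 \<omega> ^ n \<partial>M)"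
      by (simp only: nn_integral_cmult[OF borel_measurable_power_ennreal[OF F]])
  qed
  also have "\<dots> \<le> (\<Sum>n. ennreal ((l * K) ^ n))"
  proof (intro suminf_le allI)
    fix n
    have "ennreal (1 / fact n) * ennreal (l ^ n) * (\<integral>\<^sup>+\<omega>. tail_occupation \<beta> 0 \<omega> ^ n \<partial>M)
        \<le> ennreal (1 / fact n) * ennreal (l ^ n) * ennreal (fact n * K ^ n)"
      by (intro mult_left_mono moment) simp
    also have "\<dots> = ennreal ((l * K) ^ n)"
      using assms(3) K by (simp add: power_mult_distrib flip: ennreal_mult)
    finally show "ennreal (1 / fact n) * ennreal (l ^ n) * (\<integral>\<^sup>+\<omega>. tail_occupation \<beta> 0 \<omega> ^ n \<partial>M)
        \<le> ennreal ((l * K) ^ n)" .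
  qed simp_all
  also have "\<dots> \<le> (\<Sum>n. ennreal ((1/2) ^ n))"
    using assms(3,4) K by (intro suminf_le allI ennreal_leI power_mono) (auto simp: K_def)
  also have "\<dots> = ennreal (\<Sum>n. (1/2) ^ n)"
    by (intro suminf_ennreal2 summable_geometric) auto
  also have "(\<Sum>n. (1/2::real) ^ n) = 2"
    using suminf_geometric[of "1/2::real"] by simp
  finally show ?thesis
    by simp
qed

lemma nn_integral_positive_part_le_tail_occupation:
  fixes \<alpha> \<beta> e :: real and g :: "'a \<times> 'a \<Rightarrow> real"
  assumes g: "\<And>x y. g (x, y) \<le> e * (if x = y then 1 else min (norm (x - y) powr (- \<alpha>)) 1)"
    and "0 \<le> e" and "\<beta> \<le> \<alpha>" and \<omega>: "\<omega> \<in> space M"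
  shows "(\<integral>\<^sup>+s. ennreal (max (g (B s \<omega>, B' s \<omega>)) 0) * indicator {0..} s \<partial>lborel)
    \<le> ennreal e * tail_occupation \<beta> 0 \<omega>"
proof -
  have "(\<integral>\<^sup>+s. ennreal (max (g (B s \<omega>, B' s \<omega>)) 0) * indicator {0..} s \<partial>lborel)
      \<le> (\<integral>\<^sup>+s. ennreal e * (ennreal (path_decay \<beta> \<omega> s) * indicator {0..} s) \<partial>lborel)"
  proof (intro nn_integral_mono)
    fix s :: real
    show "ennreal (max (g (B s \<omega>, B' s \<omega>)) 0) * indicator {0..} s
        \<le> ennreal e * (ennreal (path_decay \<beta> \<omega> s) * indicator {0..} s)"
    proof (cases "0 \<le> s")
      case True
      have "g (B s \<omega>, B' s \<omega>) \<le> e * path_decay \<beta> \<omega> s"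
        using g[of "B s \<omega>" "B' s \<omega>"] unfolding path_decay_def max_absorb2[OF True]
        by (rule order_trans) (intro mult_left_mono cutoff_powr_le_polydecay assms(2,3))
      then have "max (g (B s \<omega>, B' s \<omega>)) 0 \<le> e * path_decay \<beta> \<omega> s"
        using assms(2) by (simp add: path_decay_def polydecay_nonneg)
      then show ?thesis
        using True assms(2) by (simp add: ennreal_leI flip: ennreal_mult')
    qed simp
  qed
  also have "\<dots> = ennreal e * tail_occupation \<beta> 0 \<omega>"
  proof -
    have "(\<lambda>s. ennreal (path_decay \<beta> \<omega> s)) \<in> borel_measurable lborel"
      using borel_measurable_continuous_onI[OF continuous_on_path_decay[OF \<omega>]] by simp
    then show ?thesis
      unfolding tail_occupation_def
      by (intro nn_integral_cmult borel_measurable_times_ennreal borel_measurable_indicator) auto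
  qed
  finally show ?thesis .
qed

text \<open>Only the positive part of \<open>g\<close> can make the exponential large.\<close>
lemma ereal_exp_integral_le_exp_tail_occupation:
  fixes \<alpha> \<beta> e q :: real and g :: "'a \<times> 'a \<Rightarrow> real"
  assumes g: "\<And>x y. g (x, y) \<le> e * (if x = y then 1 else min (norm (x - y) powr (- \<alpha>)) 1)"
    and "0 \<le> e" and "\<beta> \<le> \<alpha>" and "0 \<le> q" and \<omega>: "\<omega> \<in> space M"
  shows "ereal_exp (ereal q * ext_integral_0_inf (\<lambda>s. g (B s \<omega>, B' s \<omega>)))
    \<le> exp_ennreal (ennreal (q * e) * tail_occupation \<beta> 0 \<omega>)"
proof -
  define P where "P = (\<integral>\<^sup>+s. ennreal (max (g (B s \<omega>, B' s \<omega>)) 0) * indicator {0..} s \<partial>lborel)"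
  have "ereal q * ext_integral_0_inf (\<lambda>s. g (B s \<omega>, B' s \<omega>)) \<le> ereal q * enn2ereal P"
    unfolding ext_integral_0_inf_def P_def[symmetric]
    using assms(4) by (intro ereal_mult_left_mono enn2ereal_diff_le) auto
  also have "\<dots> = enn2ereal (ennreal q * P)"
    using assms(4) by (simp add: times_ennreal.rep_eq enn2ereal_ennreal)
  finally have "ereal_exp (ereal q * ext_integral_0_inf (\<lambda>s. g (B s \<omega>, B' s \<omega>))) \<le> exp_ennreal (ennreal q * P)"
    unfolding ereal_exp_enn2ereal[symmetric] by (rule ereal_exp_mono)
  also have "\<dots> \<le> exp_ennreal (ennreal q * (ennreal e * tail_occupation \<beta> 0 \<omega>))"
    unfolding P_def
    by (intro exp_ennreal_mono mult_left_mono nn_integral_positive_part_le_tail_occupation[OF g assms(2,3) \<omega>])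
      simp
  finally show ?thesis
    using assms(2,4) by (simp add: ennreal_mult mult.assoc)
qed

lemma nn_integral_ereal_exp_le_2:
  fixes \<alpha> \<beta> e q :: real and g :: "'a \<times> 'a \<Rightarrow> real"
  assumes g: "\<And>x y. g (x, y) \<le> e * (if x = y then 1 else min (norm (x - y) powr (- \<alpha>)) 1)"
    and "0 \<le> e" and "2 < \<beta>" and "\<beta> \<le> \<alpha>" and "\<beta> < DIM('a)"
    and "0 \<le> q" and "q * e * green_const \<beta> DIM('a) \<le> 1/2"
  shows "(\<integral>\<^sup>+\<omega>. ereal_exp (ereal q * ext_integral_0_inf (\<lambda>s. g (B s \<omega>, B' s \<omega>))) \<partial>M) \<le> 2"
proof -
  have "(\<integral>\<^sup>+\<omega>. ereal_exp (ereal q * ext_integral_0_inf (\<lambda>s. g (B s \<omega>, B' s \<omega>))) \<partial>M)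
      \<le> (\<integral>\<^sup>+\<omega>. exp_ennreal (ennreal (q * e) * tail_occupation \<beta> 0 \<omega>) \<partial>M)"
    using assms(2,4,6) by (intro nn_integral_mono ereal_exp_integral_le_exp_tail_occupation[OF g]) auto
  also have "\<dots> \<le> 2"
    using assms(2,3,5-7) by (intro exp_tail_occupation_le_2) auto
  finally show ?thesis .
qed

end

theorem lemma1p1:
  fixes \<alpha> q :: real
  assumes "\<alpha> > 2" and "q > 0" and "DIM('a::euclidean_space) \<ge> 3"
  shows "\<exists>c>0. \<forall>\<epsilon>::real. \<epsilon> \<le> c \<longrightarrow>
    (\<forall>g :: 'a \<times> 'a \<Rightarrow> real.
       g \<in> borel_measurable borel \<longrightarrow>
       (\<forall>x y. g (x, y) \<le> \<epsilon> * (if x = y then 1 else min (norm (x - y) powr (- \<alpha>)) 1)) \<longrightarrow>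
       (\<forall>(M :: 'w measure) (B :: real \<Rightarrow> 'w \<Rightarrow> 'a) (B' :: real \<Rightarrow> 'w \<Rightarrow> 'a) x y.
          is_BM M B x \<and> is_BM M B' y \<and> indep_processes M B B' \<longrightarrow>
          (\<integral>\<^sup>+ \<omega>. ereal_exp (ereal q * ext_integral_0_inf (\<lambda>s. g (B s \<omega>, B' s \<omega>))) \<partial>M) \<le> 2))"
proof -
  define \<beta> where "\<beta> = min \<alpha> (5/2)"
  have \<beta>: "2 < \<beta>" "\<beta> < DIM('a)" "\<beta> \<le> \<alpha>"
    using assms by (auto simp: \<beta>_def)
  define K where "K = green_const \<beta> DIM('a)"
  have K: "0 < K"
    unfolding K_def using \<beta> green_const_pos by simp
  show ?thesis
  proof (intro exI[of _ "1 / (2 * q * K)"] conjI allI impI)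
    fix \<epsilon> and g :: "'a \<times> 'a \<Rightarrow> real" and M :: "'w measure" and B B' :: "real \<Rightarrow> 'w \<Rightarrow> 'a" and x y
    assume \<epsilon>: "\<epsilon> \<le> 1 / (2 * q * K)" and g: "\<forall>x y. g (x, y) \<le> \<epsilon> * (if x = y then 1 else min (norm (x - y) powr (- \<alpha>)) 1)"
      and "is_BM M B x \<and> is_BM M B' y \<and> indep_processes M B B'"
    then interpret brownian_pair M B B' x y
      by (simp add: brownian_pair_def)
    have "q * max \<epsilon> 0 * K \<le> q * (1 / (2 * q * K)) * K"
      using \<epsilon> K assms(2) by (intro mult_right_mono mult_left_mono) auto
    then have "q * max \<epsilon> 0 * K \<le> 1/2"
      using K assms(2) by simp
    moreover have "g (x, y) \<le> max \<epsilon> 0 * (if x = y then 1 else min (norm (x - y) powr (- \<alpha>)) 1)" for x y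
      using g[rule_format, of x y] by (rule order_trans) (simp add: mult_right_mono)
    ultimately show "(\<integral>\<^sup>+\<omega>. ereal_exp (ereal q * ext_integral_0_inf (\<lambda>s. g (B s \<omega>, B' s \<omega>))) \<partial>M) \<le> 2"
      using \<beta> assms(2) by (intro nn_integral_ereal_exp_le_2) (auto simp: K_def)
  qed (use K assms(2) in simp)
qed

end
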